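(* Let $(V,\mathcal S)$ be a quantum vertex algebra and set $R(x)=\mathcal S(x)\sigma:V\otimes V\to V\otimes V\otimes\mathbb C((x))$, where $\sigma$ is the flip map on $V\otimes V$. Then $R(x)$ is an invertible twisting operator for the ordered pair $(V,V)$.
   Context: All vector spaces are over $\mathbb{C}$. A nonlocal vertex algebra is a vector space $V$ with a linear map $Y(\cdot,x):V\to \mathrm{Hom}(V,V((x)))$, $v\mapsto Y(v,x)=\sum_{n\in\mathbb Z}v_nx^{-n-1}$, and a vector $\mathbf 1\in V$ such that for all $v$: $Y(\mathbf 1,x)v=v$, $Y(v,x)\mathbf 1\in V[[x]]$, $\lim_{x\to0}Y(v,x)\mathbf 1=v$; and for all $u,v,w$ there is $k\ge0$ with $(x_0+x_2)^kY(u,x_0+x_2)Y(v,x_2)w=(x_0+x_2)^kY(Y(u,x_0)v,x_2)w$. Write $Y(x)(u\otimes v)=Y(u,x)v$, $\mathcal Dv=v_{-2}\mathbf 1$. Conventions: $f(x_1\pm x_2)$ for $f\in\mathbb C((x))$ (and $(x_1\pm x_2)^n$) is expanded in nonnegative powers of the second variable; $T^{ij}$ denotes $T$ acting on tensor factors $i,j$; maps are extended linearly over scalar series. A weak quantum vertex algebra is a nonlocal vertex algebra $V$ such that for all $u,v\in V$ there exist finitely many $u^{(i)},v^{(i)}\in V$, $f_i\in\mathbb C((x))$ and $k\ge0$ with $(x_1-x_2)^kY(u,x_1)Y(v,x_2)=(x_1-x_2)^k\sum_i f_i(x_2-x_1)Y(v^{(i)},x_2)Y(u^{(i)},x_1)$.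 A rational quantum Yang–Baxter operator on $V$ is a linear map $\mathcal S(x):V\otimes V\to V\otimes V\otimes\mathbb C((x))$ with $\mathcal S^{12}(x)\mathcal S^{13}(x+z)\mathcal S^{23}(z)=\mathcal S^{23}(z)\mathcal S^{13}(x+z)\mathcal S^{12}(x)$; it is unitary if $\mathcal S(x)\sigma\mathcal S(-x)\sigma=1$. A quantum vertex algebra is a pair $(V,\mathcal S)$ where $V$ is a weak quantum vertex algebra and $\mathcal S(x)$ is a unitary rational quantum Yang–Baxter operator on $V$ such that $\mathcal S(x)(\mathbf 1\otimes v)=\mathbf 1\otimes v$, $[\mathcal D\otimes1,\mathcal S(x)]=-\frac{d}{dx}\mathcal S(x)$, $Y(u,x)v=e^{x\mathcal D}\sum_i f_i(-x)Y(v_i,-x)u_i$ where $\mathcal S(x)(v\otimes u)=\sum_i v_i\otimes u_i\otimes f_i(x)$, and $\mathcal S(x_1)(Y(x_2)\otimes1)=(Y(x_2)\otimes1)\mathcal S^{23}(x_1)\mathcal S^{13}(x_1+x_2)$. Twisting operator for $(U,V)$: a linear map $R(x):V\otimes U\to U\otimes V\otimes\mathbb C((x))$ such that $R(x)(v\otimes\mathbf 1)=\mathbf 1\otimes v$, $R(x)(\mathbf 1\otimes u)=u\otimes\mathbf 1$, $R(x_1)(1\otimes Y(x_2))=(Y(x_2)\otimes1)R^{23}(x_1)R^{12}(x_1+x_2)$ on $V\otimes U\otimes U$, and $R(x_1)(Y(x_2)\otimes 1)=(1\otimes Y(x_2))R^{12}(x_1-x_2)R^{23}(x_1)$ on $V\otimes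 V\otimes U$; it is invertible if its $\mathbb C((x))$-linear extension is invertible. *)

theory Defs
  imports "HOL-Library.Poly_Mapping" "HOL-Library.Groups_Big_Fun"
    "HOL-Computational_Algebra.Formal_Laurent_Series"
begin

text \<open>A complex vector space with basis indexed by
 the type 'i is modelled as the space of finitely supported functions 'i =>0 complex.
 Tensor products of such spaces are the free spaces on product index types.
 A (vector valued) formal series in two variables (y1,y2) is modelled by its array of
 coefficients: F a b is the coefficient of y1^a y2^b.  One-variable series are two-variable
 series in the first variable only.  Linear maps out of a free space are given by their
 values on basis vectors.\<close>

type_synonym 'i vec = "'i \<Rightarrow>\<^sub>0 complex"
type_synonym 'i ser2 = "int \<Rightarrow> int \<Rightarrow> 'i vec"
type_synonym cser2 = "int \<Rightarrow> int \<Rightarrow> complex"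

definition smul :: "complex \<Rightarrow> 'i vec \<Rightarrow> 'i vec" where
  "smul c v = Poly_Mapping.map (\<lambda>a. c * a) v"

definition bv :: "'i \<Rightarrow> 'i vec" where
  "bv i = Poly_Mapping.single i 1"

definition tens :: "'i vec \<Rightarrow> 'j vec \<Rightarrow> ('i \<times> 'j) vec" where
  "tens u v = Sum_any (\<lambda>(i, j). smul (Poly_Mapping.lookup u i * Poly_Mapping.lookup v j) (bv (i, j)))"

definition const2 :: "'i vec \<Rightarrow> 'i ser2" where
  "const2 t = (\<lambda>a b. if a = 0 \<and> b = 0 then t else 0)"

definition sm :: "cser2 \<Rightarrow> 'i ser2 \<Rightarrow> 'i ser2" where
  "sm P G = (\<lambda>a b. Sum_any (\<lambda>(c, d). smul (P c d) (G (a - c) (b - d))))"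

definition app :: "('i \<Rightarrow> 'j ser2) \<Rightarrow> 'i ser2 \<Rightarrow> 'j ser2" where
  "app E F = (\<lambda>a b. Sum_any (\<lambda>(i, c, d). smul (Poly_Mapping.lookup (F (a - c) (b - d)) i) (E i c d)))"

definition sub_x :: "complex fls \<Rightarrow> cser2" where
  "sub_x f = (\<lambda>c d. if d = 0 then fls_nth f c else 0)"

definition sub_z :: "complex fls \<Rightarrow> cser2" where
  "sub_z f = (\<lambda>c d. if c = 0 then fls_nth f d else 0)"

text \<open>f(y1 + s*y2), expanded in nonnegative powers of y2\<close>
definition sub_plus :: "complex \<Rightarrow> complex fls \<Rightarrow> cser2" where
  "sub_plus s f = (\<lambda>c d. if d \<ge> 0
       then s ^ nat d * ((of_int (c + d) :: complex) gchoose nat d) * fls_nth f (c + d) else 0)"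

definition sub_negx :: "complex fls \<Rightarrow> cser2" where
  "sub_negx f = (\<lambda>c d. if d = 0 then (-1) ^ nat \<bar>c\<bar> * fls_nth f c else 0)"

definition sub_dx :: "complex fls \<Rightarrow> cser2" where
  "sub_dx f = sub_x (fls_deriv f)"

text \<open>A linear map M : W1 -> W2 (x) C((x)) given on basis vectors, with a substitution of x\<close>
definition sop :: "('x \<Rightarrow> ('y \<Rightarrow>\<^sub>0 complex fls)) \<Rightarrow> (complex fls \<Rightarrow> cser2) \<Rightarrow> 'x \<Rightarrow> 'y ser2" where
  "sop M \<sigma> i = (\<lambda>c d. Sum_any (\<lambda>p. smul (\<sigma> (Poly_Mapping.lookup (M i) p) c d) (bv p)))"

definition leg12 :: "('x \<times> 'y \<Rightarrow> ('p \<times> 'q \<Rightarrow>\<^sub>0 complex fls)) \<Rightarrow> (complex fls \<Rightarrow> cser2)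
    \<Rightarrow> 'x \<times> 'y \<times> 'z \<Rightarrow> ('p \<times> 'q \<times> 'z) ser2" where
  "leg12 M \<sigma> = (\<lambda>(a, b, c) cc dd.
     Sum_any (\<lambda>(m, n). smul (\<sigma> (Poly_Mapping.lookup (M (a, b)) (m, n)) cc dd) (bv (m, n, c))))"

definition leg23 :: "('y \<times> 'z \<Rightarrow> ('q \<times> 'r \<Rightarrow>\<^sub>0 complex fls)) \<Rightarrow> (complex fls \<Rightarrow> cser2)
    \<Rightarrow> 'x \<times> 'y \<times> 'z \<Rightarrow> ('x \<times> 'q \<times> 'r) ser2" where
  "leg23 M \<sigma> = (\<lambda>(a, b, c) cc dd.
     Sum_any (\<lambda>(n, t). smul (\<sigma> (Poly_Mapping.lookup (M (b, c)) (n, t)) cc dd) (bv (a, n, t))))"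

definition leg13 :: "('x \<times> 'z \<Rightarrow> ('p \<times> 'r \<Rightarrow>\<^sub>0 complex fls)) \<Rightarrow> (complex fls \<Rightarrow> cser2)
    \<Rightarrow> 'x \<times> 'y \<times> 'z \<Rightarrow> ('p \<times> 'y \<times> 'r) ser2" where
  "leg13 M \<sigma> = (\<lambda>(a, b, c) cc dd.
     Sum_any (\<lambda>(m, t). smul (\<sigma> (Poly_Mapping.lookup (M (a, c)) (m, t)) cc dd) (bv (m, b, t))))"

definition flip :: "'x \<times> 'y \<Rightarrow> ('y \<times> 'x) ser2" where
  "flip = (\<lambda>(i, j). const2 (bv (j, i)))"

text \<open>Vertex operators: Y u v n is u_n v, i.e. Y(u,x)v = sum_n (Y u v n) x^(-n-1).\<close>
type_synonym 'b vop = "'b vec \<Rightarrow> 'b vec \<Rightarrow> int \<Rightarrow> 'b vec"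

definition Yx :: "'b vop \<Rightarrow> 'b \<times> 'b \<Rightarrow> 'b ser2" where
  "Yx Y = (\<lambda>(i, j) c d. if d = 0 then Y (bv i) (bv j) (- c - 1) else 0)"

definition Y12 :: "'a vop \<Rightarrow> 'a \<times> 'a \<times> 'z \<Rightarrow> ('a \<times> 'z) ser2" where
  "Y12 Y = (\<lambda>(a, b, c) cc dd. if cc = 0 then tens (Y (bv a) (bv b) (- dd - 1)) (bv c) else 0)"

definition Y23 :: "'a vop \<Rightarrow> 'x \<times> 'a \<times> 'a \<Rightarrow> ('x \<times> 'a) ser2" where
  "Y23 Y = (\<lambda>(a, b, c) cc dd. if cc = 0 then tens (bv a) (Y (bv b) (bv c) (- dd - 1)) else 0)"

definition Dop :: "'b vop \<Rightarrow> 'b vec \<Rightarrow> 'b vec \<Rightarrow> 'b vec" where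
  "Dop Y vac v = Y v vac (-2)"

definition D1 :: "('b vec \<Rightarrow> 'b vec) \<Rightarrow> 'b \<times> 'b \<Rightarrow> ('b \<times> 'b) ser2" where
  "D1 D = (\<lambda>(i, j). const2 (tens (D (bv i)) (bv j)))"

definition negvar :: "'i ser2 \<Rightarrow> 'i ser2" where
  "negvar G = (\<lambda>a b. smul ((-1) ^ nat \<bar>a\<bar>) (G a b))"

definition expD :: "('b vec \<Rightarrow> 'b vec) \<Rightarrow> 'b ser2 \<Rightarrow> 'b ser2" where
  "expD D G = (\<lambda>a b. Sum_any (\<lambda>k::nat. smul (1 / of_nat (fact k)) ((D ^^ k) (G (a - int k) b))))"

text \<open>Y(u, y1 + y2) applied to a vector series G in (y1,y2), (y1+y2)^m expanded in
 nonnegative powers of y2\<close>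
definition Yplus :: "'b vop \<Rightarrow> 'b vec \<Rightarrow> 'b ser2 \<Rightarrow> 'b ser2" where
  "Yplus Y u G = (\<lambda>a b. Sum_any (\<lambda>(n, c, d).
      smul (sub_plus 1 (fls_X_intpow (- n - 1)) c d) (Y u (G (a - c) (b - d)) n)))"

definition nonlocal_va :: "'b vop \<Rightarrow> 'b vec \<Rightarrow> bool" where
  "nonlocal_va Y vac \<longleftrightarrow>
    (\<forall>u u' v n. Y (u + u') v n = Y u v n + Y u' v n) \<and>
    (\<forall>c u v n. Y (smul c u) v n = smul c (Y u v n)) \<and>
    (\<forall>u v v' n. Y u (v + v') n = Y u v n + Y u v' n) \<and>
    (\<forall>c u v n. Y u (smul c v) n = smul c (Y u v n)) \<and>
    (\<forall>u v. \<exists>N. \<forall>n\<ge>N. Y u v n = 0) \<and>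
    (\<forall>v n. Y vac v n = (if n = -1 then v else 0)) \<and>
    (\<forall>v n. n \<ge> 0 \<longrightarrow> Y v vac n = 0) \<and>
    (\<forall>v. Y v vac (-1) = v) \<and>
    (\<forall>u v w. \<exists>k::nat.
       sm (sub_plus 1 (fls_X ^ k))
          (Yplus Y u (\<lambda>a b. if a = 0 then Y v w (- b - 1) else 0)) =
       sm (sub_plus 1 (fls_X ^ k)) (\<lambda>a b. Y (Y u v (- a - 1)) w (- b - 1)))"

definition weak_qva :: "'b vop \<Rightarrow> 'b vec \<Rightarrow> bool" where
  "weak_qva Y vac \<longleftrightarrow> nonlocal_va Y vac \<and>
    (\<forall>u v. \<exists>(L :: ('b vec \<times> 'b vec \<times> complex fls) list) (k::nat). \<forall>w.
       sm (sub_plus (-1) (fls_X ^ k)) (\<lambda>a b. Y u (Y v w (- b - 1)) (- a - 1)) =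
       sm (sub_plus (-1) (fls_X ^ k))
         (\<lambda>a b. sum_list (map (\<lambda>(ui, vi, f).
             sm (\<lambda>c d. sub_plus (-1) f d c) (\<lambda>c d. Y vi (Y ui w (- c - 1)) (- d - 1)) a b) L)))"

type_synonym 'b qop = "'b \<times> 'b \<Rightarrow> ('b \<times> 'b \<Rightarrow>\<^sub>0 complex fls)"

definition rational_qybo :: "'b qop \<Rightarrow> bool" where
  "rational_qybo S \<longleftrightarrow> (\<forall>t :: ('b \<times> 'b \<times> 'b) vec.
     app (leg12 S sub_x) (app (leg13 S (sub_plus 1)) (app (leg23 S sub_z) (const2 t))) =
     app (leg23 S sub_z) (app (leg13 S (sub_plus 1)) (app (leg12 S sub_x) (const2 t))))"

definition unitary :: "'b qop \<Rightarrow> bool" where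
  "unitary S \<longleftrightarrow> (\<forall>t :: ('b \<times> 'b) vec.
     app (sop S sub_x) (app flip (app (sop S sub_negx) (app flip (const2 t)))) = const2 t)"

definition qva :: "'b vop \<Rightarrow> 'b vec \<Rightarrow> 'b qop \<Rightarrow> bool" where
  "qva Y vac S \<longleftrightarrow> weak_qva Y vac \<and> rational_qybo S \<and> unitary S \<and>
    (\<forall>v. app (sop S sub_x) (const2 (tens vac v)) = const2 (tens vac v)) \<and>
    (\<forall>t. (\<lambda>a b. app (D1 (Dop Y vac)) (app (sop S sub_x) (const2 t)) a b
               - app (sop S sub_x) (app (D1 (Dop Y vac)) (const2 t)) a b)
         = (\<lambda>a b. - app (sop S sub_dx) (const2 t) a b)) \<and>
    (\<forall>u v. (\<lambda>a b. if b = 0 then Y u v (- a - 1) else 0) =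
       expD (Dop Y vac) (negvar (app (Yx Y) (app (sop S sub_x) (const2 (tens v u)))))) \<and>
    (\<forall>t :: ('b \<times> 'b \<times> 'b) vec.
       app (sop S sub_x) (app (Y12 Y) (const2 t)) =
       app (Y12 Y) (app (leg23 S sub_x) (app (leg13 S (sub_plus 1)) (const2 t))))"

text \<open>R(x) : V (x) U -> U (x) V (x) C((x)), given on basis vectors; U has basis 'a, V has basis 'b\<close>
definition twisting_op :: "'a vop \<Rightarrow> 'a vec \<Rightarrow> 'b vop \<Rightarrow> 'b vec
     \<Rightarrow> ('b \<times> 'a \<Rightarrow> ('a \<times> 'b \<Rightarrow>\<^sub>0 complex fls)) \<Rightarrow> bool" where
  "twisting_op YU vacU YV vacV R \<longleftrightarrow>
    (\<forall>v. app (sop R sub_x) (const2 (tens v vacU)) = const2 (tens vacU v)) \<and>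
    (\<forall>u. app (sop R sub_x) (const2 (tens vacV u)) = const2 (tens u vacV)) \<and>
    (\<forall>t :: ('b \<times> 'a \<times> 'a) vec.
       app (sop R sub_x) (app (Y23 YU) (const2 t)) =
       app (Y12 YU) (app (leg23 R sub_x) (app (leg12 R (sub_plus 1)) (const2 t)))) \<and>
    (\<forall>t :: ('b \<times> 'b \<times> 'a) vec.
       app (sop R sub_x) (app (Y12 YV) (const2 t)) =
       app (Y23 YV) (app (leg12 R (sub_plus (-1))) (app (leg23 R sub_x) (const2 t))))"

text \<open>C((x))-linear extension of R to the free C((x))-module on basis pairs\<close>
definition ext_lin :: "('x \<Rightarrow> ('y \<Rightarrow>\<^sub>0 complex fls)) \<Rightarrow> ('x \<Rightarrow>\<^sub>0 complex fls) \<Rightarrow> ('y \<Rightarrow>\<^sub>0 complex fls)" where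
  "ext_lin R T = Sum_any (\<lambda>i. Poly_Mapping.map (\<lambda>f. Poly_Mapping.lookup T i * f) (R i))"

definition invertible_twisting where
  "invertible_twisting YU vacU YV vacV R \<longleftrightarrow> twisting_op YU vacU YV vacV R \<and> bij (ext_lin R)"

text \<open>R(x) = S(x) sigma\<close>
definition comp_flip :: "'b qop \<Rightarrow> 'b qop" where
  "comp_flip S = (\<lambda>(i, j). S (j, i))"

end

theory Submission
  imports Defs
begin

text \<open>The operators of the statement act on basis vectors with values in two-variable series
 and are extended linearly over series; they compose associatively whenever every coefficient
 of a composite is a finite sum, which holds for all operators occurring here (Laurent supports,
 one factor with only nonnegative powers of the second variable).

 The vacuum conditions for R are the vacuum property of S, once directly and once transported
 by unitarity S(x) \<sigma> S(-x) \<sigma> = 1. The identity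
 R(x1)(1 \<otimes> Y(x2)) = (Y(x2) \<otimes> 1) R^23(x1) R^12(x1 + x2) is the hexagon identity
 S(x1)(Y(x2) \<otimes> 1) = (Y(x2) \<otimes> 1) S^23(x1) S^13(x1 + x2) conjugated by permutations of
 the tensor factors. For R(x1)(Y(x2) \<otimes> 1) = (1 \<otimes> Y(x2)) R^12(x1 - x2) R^23(x1), reflect
 x \<mapsto> -x in the hexagon identity and cancel S(-x) against S(x) by unitarity, once on
 V \<otimes> V and once in the legs 13 and 23. Finally, operators whose Laurent coefficients are
 substituted at y1 + s y2 compose like the corresponding matrices over C((x)), so unitarity
 exhibits \<sigma> S(-x) \<sigma> as a two-sided inverse of the C((x))-linear extension of R.\<close>

lemma lookup_smul[simp]: "Poly_Mapping.lookup (smul c v) k = c * Poly_Mapping.lookup v k"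
  unfolding smul_def by (simp add: Poly_Mapping.map.rep_eq when_def)

lemma smul_0[simp]: "smul 0 v = 0" "smul c 0 = 0"
  by (auto intro!: poly_mapping_eqI)

lemma smul_1[simp]: "smul 1 v = v"
  by (rule poly_mapping_eqI) simp

lemma smul_smul: "smul a (smul b v) = smul (a * b) v"
  by (rule poly_mapping_eqI) (simp add: mult.assoc)

lemma lookup_bv: "Poly_Mapping.lookup (bv i) k = (if k = i then 1 else 0)"
  unfolding bv_def by (simp add: lookup_single when_def)

lemma keys_empty_iff: "Poly_Mapping.keys v = {} \<longleftrightarrow> v = 0"
  by (metis keys_zero lookup_zero not_in_keys_iff_lookup_eq_zero poly_mapping_eqI empty_iff)

lemma lookup_Sum_any:
  assumes "finite {x. f x \<noteq> 0}"
  shows "Poly_Mapping.lookup (Sum_any f) k = Sum_any (\<lambda>x. Poly_Mapping.lookup (f x) k)"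
proof -
  have "Sum_any f = sum f {x. f x \<noteq> 0}" using assms Sum_any.expand_superset by blast
  moreover have "Sum_any (\<lambda>x. Poly_Mapping.lookup (f x) k) = sum (\<lambda>x. Poly_Mapping.lookup (f x) k) {x. f x \<noteq> 0}"
    by (rule Sum_any.expand_superset) (use assms in auto)
  ultimately show ?thesis by (simp add: lookup_sum)
qed

lemma Sum_any_nonzero_ex: "Sum_any f \<noteq> 0 \<Longrightarrow> \<exists>x. f x \<noteq> 0"
  by (metis Sum_any.neutral ext)

lemma Sum_any_left_distrib_idom: "Sum_any g * (r::'a::idom) = Sum_any (\<lambda>n. g n * r)"
proof (cases "r = 0 \<or> finite {a. g a \<noteq> 0}")
  case True
  then show ?thesis by (auto intro: Sum_any_left_distrib)
next
  case False
  then have "{a. g a * r \<noteq> 0} = {a. g a \<noteq> 0}" by auto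
  with False show ?thesis by simp
qed

lemma Sum_any_right_distrib_idom: "(r::'a::idom) * Sum_any g = Sum_any (\<lambda>n. r * g n)"
  using Sum_any_left_distrib_idom[of g r] by (simp add: mult.commute)

lemma smul_eq_0_iff: "smul c v = 0 \<longleftrightarrow> c = 0 \<or> v = 0"
proof
  assume h: "smul c v = 0"
  show "c = 0 \<or> v = 0"
  proof (rule disjCI)
    assume "v \<noteq> 0"
    then obtain k where "Poly_Mapping.lookup v k \<noteq> 0"
      by (metis lookup_zero poly_mapping_eqI)
    with h show "c = 0"
      using lookup_smul[of c v k] by simp
  qed
qed auto

lemma smul_Sum_any: "smul c (Sum_any f) = Sum_any (\<lambda>x. smul c (f x))"
proof (cases "c = 0")
  case False
  then have supp: "{x. smul c (f x) \<noteq> 0} = {x. f x \<noteq> 0}"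
    by (simp add: smul_eq_0_iff)
  show ?thesis
  proof (cases "finite {x. f x \<noteq> 0}")
    case True
    then show ?thesis
      by (intro poly_mapping_eqI) (simp add: lookup_Sum_any supp Sum_any_right_distrib_idom)
  qed (simp add: supp)
qed simp

lemma Sum_any_pair:
  assumes "finite {p. g (fst p) (snd p) \<noteq> (0::'c::comm_monoid_add)}"
  shows "Sum_any (\<lambda>x. Sum_any (\<lambda>y. g x y)) = Sum_any (\<lambda>p. g (fst p) (snd p))"
proof -
  let ?S = "{p. g (fst p) (snd p) \<noteq> 0}"
  have "{x. \<exists>y. g x y \<noteq> 0} \<times> {y. \<exists>x. g x y \<noteq> 0} \<subseteq> fst ` ?S \<times> snd ` ?S"
  proof
    fix p assume "p \<in> {x. \<exists>y. g x y \<noteq> 0} \<times> {y. \<exists>x. g x y \<noteq> 0}"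
    then obtain y x where "g (fst p) y \<noteq> 0" "g x (snd p) \<noteq> 0" by auto
    then have h1: "(fst p, y) \<in> ?S" and h2: "(x, snd p) \<in> ?S" by auto
    have "fst p \<in> fst ` ?S" using imageI[OF h1, of fst] by simp
    moreover have "snd p \<in> snd ` ?S" using imageI[OF h2, of snd] by simp
    ultimately show "p \<in> fst ` ?S \<times> snd ` ?S" by (simp add: mem_Times_iff)
  qed
  then have "Sum_any (\<lambda>x. Sum_any (g x)) = Sum_any (\<lambda>(x, y). g x y)"
    by (rule Sum_any.cartesian_product[rotated]) (use assms in auto)
  then show ?thesis by (simp add: case_prod_beta)
qed

lemma Sum_any_pair_reindex:
  assumes "bij h" and "finite {p. W p \<noteq> (0::'c::comm_monoid_add)}"
  shows "Sum_any (\<lambda>x. Sum_any (\<lambda>y. W (h (x, y)))) = Sum_any W"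
proof -
  have "finite (h -` {p. W p \<noteq> 0})"
    using assms by (intro finite_vimageI) (auto simp: bij_def)
  then have "Sum_any (\<lambda>x. Sum_any (\<lambda>y. W (h (x, y)))) = Sum_any (W \<circ> h)"
    by (subst Sum_any_pair) (simp_all add: vimage_def)
  also have "\<dots> = Sum_any W"
    by (rule Sum_any.reindex_cong[OF assms(1) refl, symmetric])
  finally show ?thesis .
qed

lemma Sum_any_inj_reindex:
  fixes g :: "'a \<Rightarrow> 'c::comm_monoid_add"
  assumes inj: "inj h" and z: "\<And>x. x \<notin> range h \<Longrightarrow> g x = 0"
  shows "Sum_any g = Sum_any (\<lambda>y. g (h y))"
proof -
  have supp: "{x. g x \<noteq> 0} = h ` {y. g (h y) \<noteq> 0}"
    using z by (auto simp: image_iff) (metis rangeE)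
  show ?thesis
  proof (cases "finite {y. g (h y) \<noteq> 0}")
    case True
    then have "Sum_any g = sum g (h ` {y. g (h y) \<noteq> 0})"
      using supp Sum_any.expand_set by (metis finite_imageI)
    also have "\<dots> = sum (g \<circ> h) {y. g (h y) \<noteq> 0}"
      by (rule sum.reindex) (use inj in \<open>auto intro: inj_on_subset\<close>)
    finally show ?thesis by (simp add: Sum_any.expand_set o_def)
  next
    case False
    then have "infinite {x. g x \<noteq> 0}"
      using supp finite_imageD inj inj_on_subset by (metis subset_UNIV)
    with False show ?thesis by simp
  qed
qed

definition app_finite :: "('i \<Rightarrow> 'j ser2) \<Rightarrow> 'i ser2 \<Rightarrow> bool" where
  "app_finite E F \<longleftrightarrow> (\<forall>a b. finite {(i, c, d). Poly_Mapping.lookup (F (a - c) (b - d)) i \<noteq> 0 \<and> E i c d \<noteq> 0})"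

lemma lookup_app_at:
  assumes "finite {(i, c, d). Poly_Mapping.lookup (F (a - c) (b - d)) i \<noteq> 0 \<and> E i c d \<noteq> 0}"
  shows "Poly_Mapping.lookup (app E F a b) k =
     Sum_any (\<lambda>(i, c, d). Poly_Mapping.lookup (F (a - c) (b - d)) i * Poly_Mapping.lookup (E i c d) k)"
proof -
  have "finite {x. (\<lambda>(i, c, d). smul (Poly_Mapping.lookup (F (a - c) (b - d)) i) (E i c d)) x \<noteq> 0}"
    using assms by (rule rev_finite_subset) auto
  then show ?thesis unfolding app_def
    by (subst lookup_Sum_any) (auto simp: case_prod_beta)
qed

lemma lookup_app:
  assumes "app_finite E F"
  shows "Poly_Mapping.lookup (app E F a b) k =
     Sum_any (\<lambda>(i, c, d). Poly_Mapping.lookup (F (a - c) (b - d)) i * Poly_Mapping.lookup (E i c d) k)"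
  using assms unfolding app_finite_def by (intro lookup_app_at) blast

lemma app_nonzero_ex:
  assumes "app E F a b \<noteq> 0"
  shows "\<exists>i c d. Poly_Mapping.lookup (F (a - c) (b - d)) i \<noteq> 0 \<and> E i c d \<noteq> 0"
proof -
  from assms obtain x where "(\<lambda>(i, c, d). smul (Poly_Mapping.lookup (F (a - c) (b - d)) i) (E i c d)) x \<noteq> 0"
    unfolding app_def using Sum_any_nonzero_ex by blast
  then show ?thesis by (cases x) (auto simp: smul_eq_0_iff)
qed

lemma app_const2_Sum_any:
  "app E (const2 t) a b = Sum_any (\<lambda>i. smul (Poly_Mapping.lookup t i) (E i a b))"
  unfolding app_def
  by (subst Sum_any_inj_reindex[where h = "\<lambda>i. (i, a, b)"]) (auto simp: inj_def const2_def image_iff)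

lemma app_const2_bv[simp]: "app E (const2 (bv j)) = E j"
proof (intro ext)
  fix a b
  have "Sum_any (\<lambda>i. smul (Poly_Mapping.lookup (bv j) i) (E i a b)) = Sum_any (\<lambda>i. if i = j then E i a b else 0)"
    by (rule Sum_any.cong) (simp add: lookup_bv)
  then show "app E (const2 (bv j)) a b = E j a b" by (simp add: app_const2_Sum_any)
qed

definition op_comp :: "('j \<Rightarrow> 'k ser2) \<Rightarrow> ('i \<Rightarrow> 'j ser2) \<Rightarrow> 'i \<Rightarrow> 'k ser2" where
  "op_comp E E' = (\<lambda>j. app E (E' j))"

definition app_assoc_finite :: "('j \<Rightarrow> 'k ser2) \<Rightarrow> ('i \<Rightarrow> 'j ser2) \<Rightarrow> 'i ser2 \<Rightarrow> bool" where
  "app_assoc_finite E E' F \<longleftrightarrow> (\<forall>a b. finite {(j, c', d', i, c, d).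
     Poly_Mapping.lookup (F (a - c - c') (b - d - d')) j \<noteq> 0 \<and>
     Poly_Mapping.lookup (E' j c' d') i \<noteq> 0 \<and> E i c d \<noteq> 0})"

lemma app_finite_app:
  assumes f1: "app_finite E' F" and f6: "app_assoc_finite E E' F"
  shows "app_finite E (app E' F)"
  unfolding app_finite_def
proof (intro allI)
  fix a b
  let ?T = "{(j, c', d', i, c, d).
     Poly_Mapping.lookup (F (a - c - c') (b - d - d')) j \<noteq> 0 \<and>
     Poly_Mapping.lookup (E' j c' d') i \<noteq> 0 \<and> E i c d \<noteq> 0}"
  have "finite ?T" using f6 unfolding app_assoc_finite_def by blast
  then have "finite ((\<lambda>(j, c', d', i, c, d). (i, c, d)) ` ?T)" by simp
  then show "finite {(i, c, d). Poly_Mapping.lookup (app E' F (a - c) (b - d)) i \<noteq> 0 \<and> E i c d \<noteq> 0}"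
  proof (rule rev_finite_subset, safe)
    fix i c d
    assume h: "Poly_Mapping.lookup (app E' F (a - c) (b - d)) i \<noteq> 0" "E i c d \<noteq> 0"
    from h(1) obtain x where "(\<lambda>(j, c', d'). Poly_Mapping.lookup (F (a - c - c') (b - d - d')) j * Poly_Mapping.lookup (E' j c' d') i) x \<noteq> 0"
      unfolding lookup_app[OF f1] using Sum_any_nonzero_ex by blast
    then obtain j c' d' where "Poly_Mapping.lookup (F (a - c - c') (b - d - d')) j \<noteq> 0"
        "Poly_Mapping.lookup (E' j c' d') i \<noteq> 0" by (cases x) auto
    with h(2) show "(i, c, d) \<in> (\<lambda>(j, c', d', i, c, d). (i, c, d)) ` ?T"
      by (intro image_eqI[where x="(j, c', d', i, c, d)"]) auto
  qed
qed

lemma app_finite_op_comp: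
  assumes f6: "app_assoc_finite E E' F"
  shows "app_finite (op_comp E E') F"
  unfolding app_finite_def
proof (intro allI)
  fix a b
  let ?T = "{(j, c', d', i, c, d).
     Poly_Mapping.lookup (F (a - c - c') (b - d - d')) j \<noteq> 0 \<and>
     Poly_Mapping.lookup (E' j c' d') i \<noteq> 0 \<and> E i c d \<noteq> 0}"
  have "finite ?T" using f6 unfolding app_assoc_finite_def by blast
  then have "finite ((\<lambda>(j, c', d', i, c, d). (j, c + c', d + d')) ` ?T)" by simp
  then show "finite {(j, c1, d1). Poly_Mapping.lookup (F (a - c1) (b - d1)) j \<noteq> 0 \<and> op_comp E E' j c1 d1 \<noteq> 0}"
  proof (rule rev_finite_subset, safe)
    fix j c1 d1
    assume h: "Poly_Mapping.lookup (F (a - c1) (b - d1)) j \<noteq> 0" "op_comp E E' j c1 d1 \<noteq> 0"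
    from h(2) obtain i c d where "Poly_Mapping.lookup (E' j (c1 - c) (d1 - d)) i \<noteq> 0" "E i c d \<noteq> 0"
      unfolding op_comp_def using app_nonzero_ex by blast
    with h(1) show "(j, c1, d1) \<in> (\<lambda>(j, c', d', i, c, d). (j, c + c', d + d')) ` ?T"
      by (intro image_eqI[where x="(j, c1 - c, d1 - d, i, c, d)"]) auto
  qed
qed

text \<open>Both sides are rearrangements of the same finite sum over all index sextuples.\<close>

lemma app_assoc:
  fixes E :: "'j \<Rightarrow> 'k ser2" and E' :: "'i \<Rightarrow> 'j ser2" and F :: "'i ser2"
  assumes f1: "app_finite E' F" and f6: "app_assoc_finite E E' F"
  shows "app E (app E' F) = app (op_comp E E') F"
proof (intro ext poly_mapping_eqI)
  fix a b k
  let ?T = "{(j, c', d', i, c, d).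
     Poly_Mapping.lookup (F (a - c - c') (b - d - d')) j \<noteq> 0 \<and>
     Poly_Mapping.lookup (E' j c' d') i \<noteq> 0 \<and> E i c d \<noteq> 0}"
  define W where "W = (\<lambda>(j, c', d', i, c, d).
     Poly_Mapping.lookup (F (a - c - c') (b - d - d')) j * Poly_Mapping.lookup (E' j c' d') i *
     Poly_Mapping.lookup (E i c d) k)"
  have finW: "finite {p. W p \<noteq> 0}"
    by (rule finite_subset[of _ ?T]) (use f6 in \<open>auto simp: W_def app_assoc_finite_def\<close>)
  have "Poly_Mapping.lookup (app E (app E' F) a b) k =
      Sum_any (\<lambda>(i, c, d). Sum_any (\<lambda>(j, c', d'). W (j, c', d', i, c, d)))"
    unfolding lookup_app[OF app_finite_app[OF f1 f6]] lookup_app[OF f1] W_def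
    by (simp add: Sum_any_left_distrib_idom mult.assoc case_prod_beta)
  also have "\<dots> = Sum_any W"
  proof -
    let ?h = "\<lambda>((i::'j, c::int, d::int), (j::'i, c'::int, d'::int)). (j, c', d', i, c, d)"
    have bij: "bij ?h"
      by (rule o_bij[where g = "\<lambda>(j, c', d', i, c, d). ((i, c, d), (j, c', d'))"]) (auto simp: fun_eq_iff)
    have eq: "Sum_any (\<lambda>(i, c, d). Sum_any (\<lambda>(j, c', d'). W (j, c', d', i, c, d))) =
        Sum_any (\<lambda>x. Sum_any (\<lambda>y. W (?h (x, y))))"
      by (intro Sum_any.cong) (simp add: case_prod_unfold)
    show ?thesis unfolding eq by (rule Sum_any_pair_reindex[OF bij finW])
  qed
  also have "\<dots> = Sum_any (\<lambda>(j, c1, d1). Sum_any (\<lambda>(i, c, d). W (j, c1 - c, d1 - d, i, c, d)))"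
  proof -
    let ?h = "\<lambda>((j::'i, c1::int, d1::int), (i::'j, c::int, d::int)). (j, c1 - c, d1 - d, i, c, d)"
    have bij: "bij ?h"
      by (rule o_bij[where g = "\<lambda>(j, c', d', i, c, d). ((j, c' + c, d' + d), (i, c, d))"]) (auto simp: fun_eq_iff)
    have eq: "Sum_any (\<lambda>(j, c1, d1). Sum_any (\<lambda>(i, c, d). W (j, c1 - c, d1 - d, i, c, d))) =
        Sum_any (\<lambda>x. Sum_any (\<lambda>y. W (?h (x, y))))"
      by (intro Sum_any.cong) (simp add: case_prod_unfold)
    show ?thesis unfolding eq by (rule Sum_any_pair_reindex[OF bij finW, symmetric])
  qed
  also have "\<dots> = Poly_Mapping.lookup (app (op_comp E E') F a b) k"
    unfolding lookup_app[OF app_finite_op_comp[OF f6]]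
  proof (intro Sum_any.cong, clarify)
    fix j c1 d1
    show "Sum_any (\<lambda>(i, c, d). W (j, c1 - c, d1 - d, i, c, d)) =
      Poly_Mapping.lookup (F (a - c1) (b - d1)) j * Poly_Mapping.lookup (op_comp E E' j c1 d1) k"
    proof (cases "Poly_Mapping.lookup (F (a - c1) (b - d1)) j = 0")
      case False
      have fin: "finite {(i, c, d). Poly_Mapping.lookup (E' j (c1 - c) (d1 - d)) i \<noteq> 0 \<and> E i c d \<noteq> 0}"
      proof (rule finite_subset[OF _ finite_imageI[of ?T "\<lambda>(j, c', d', i, c, d). (i, c, d)"]], safe)
        fix i c d assume "Poly_Mapping.lookup (E' j (c1 - c) (d1 - d)) i \<noteq> 0" "E i c d \<noteq> 0"
        with False show "(i, c, d) \<in> (\<lambda>(j, c', d', i, c, d). (i, c, d)) ` ?T"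
          by (intro image_eqI[where x="(j, c1 - c, d1 - d, i, c, d)"]) auto
      qed (use f6 in \<open>auto simp: app_assoc_finite_def\<close>)
      show ?thesis unfolding op_comp_def lookup_app_at[OF fin] Sum_any_right_distrib_idom
        by (intro Sum_any.cong) (auto simp: W_def mult.assoc)
    qed (simp add: W_def case_prod_beta)
  qed
  finally show "Poly_Mapping.lookup (app E (app E' F) a b) k = Poly_Mapping.lookup (app (op_comp E E') F a b) k" .
qed

section \<open>Supports for which all compositions are finite sums\<close>

text \<open>A support K assigns to each exponent pair (a, b) of y1^a y2^b the basis indices occurring
 there. Laurent supports are those of series in V((y1))((y2)) whose y2-coefficients involve
 only finitely many basis vectors.\<close>

type_synonym 'i supp2 = "int \<Rightarrow> int \<Rightarrow> 'i set"

definition laurent_supp :: "'i supp2 \<Rightarrow> bool" where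
  "laurent_supp K \<longleftrightarrow> (\<exists>B. \<forall>a b. K a b \<noteq> {} \<longrightarrow> B \<le> b) \<and> (\<forall>b. \<exists>A. \<forall>a. K a b \<noteq> {} \<longrightarrow> A \<le> a)
     \<and> (\<forall>b. finite (\<Union>a. K a b))"

definition finite_supp :: "'i supp2 \<Rightarrow> bool" where
  "finite_supp K \<longleftrightarrow> finite (\<Union>a. \<Union>b. K a b)"

definition nonneg_supp :: "('i \<Rightarrow> 'j supp2) \<Rightarrow> bool" where
  "nonneg_supp EK \<longleftrightarrow> (\<forall>i c d. EK i c d \<noteq> {} \<longrightarrow> 0 \<le> d)"

definition supp_comp :: "'i supp2 \<Rightarrow> ('i \<Rightarrow> 'j supp2) \<Rightarrow> 'j supp2" where
  "supp_comp K EK = (\<lambda>a b. {k. \<exists>i c d. i \<in> K (a - c) (b - d) \<and> k \<in> EK i c d})"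

lemma finite_lower_bound: "finite I \<Longrightarrow> \<exists>m::int. \<forall>i\<in>I. m \<le> f i"
  using bdd_below_finite[of "f ` I"] by (auto simp: bdd_below_def)

lemma laurent_suppE:
  assumes "laurent_supp K"
  obtains B A where "\<And>a b. K a b \<noteq> {} \<Longrightarrow> B \<le> b" "\<And>a b. K a b \<noteq> {} \<Longrightarrow> A b \<le> a"
     "\<And>b. finite (\<Union>a. K a b)"
proof -
  from assms obtain B where "\<forall>a b. K a b \<noteq> {} \<longrightarrow> B \<le> b" unfolding laurent_supp_def by blast
  moreover from assms have "\<forall>b. \<exists>A. \<forall>a. K a b \<noteq> {} \<longrightarrow> A \<le> a" unfolding laurent_supp_def by blast
  then obtain A where "\<forall>b a. K a b \<noteq> {} \<longrightarrow> A b \<le> a" by metis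
  moreover have "\<And>b. finite (\<Union>a. K a b)" using assms unfolding laurent_supp_def by blast
  ultimately show ?thesis using that by blast
qed

lemma laurent_supp_familyE:
  assumes "\<forall>i. laurent_supp (EK i)"
  obtains B A where "\<And>i a b. EK i a b \<noteq> {} \<Longrightarrow> B i \<le> b" "\<And>i a b. EK i a b \<noteq> {} \<Longrightarrow> A i b \<le> a"
     "\<And>i b. finite (\<Union>a. EK i a b)"
proof -
  from assms have "\<forall>i. \<exists>B. \<forall>a b. EK i a b \<noteq> {} \<longrightarrow> B \<le> b" unfolding laurent_supp_def by blast
  then obtain B where "\<forall>i a b. EK i a b \<noteq> {} \<longrightarrow> B i \<le> b" by metis
  moreover from assms have "\<forall>i b. \<exists>A. \<forall>a. EK i a b \<noteq> {} \<longrightarrow> A \<le> a" unfolding laurent_supp_def by blast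
  then obtain A where "\<forall>i b a. EK i a b \<noteq> {} \<longrightarrow> A i b \<le> a" by metis
  moreover have "\<And>i b. finite (\<Union>a. EK i a b)" using assms unfolding laurent_supp_def by blast
  ultimately show ?thesis using that by blast
qed

text \<open>Only finitely many pairs (i, d) contribute to a fixed power y2^b of a composition: d is
 bounded above since K is bounded below in y2, and bounded below either directly or, when K
 involves only finitely many indices, by the minimum of the y2-bounds of those EK i.\<close>

lemma supp_comp_region:
  assumes K: "laurent_supp K" and E: "\<forall>i. laurent_supp (EK i)" and alt: "nonneg_supp EK \<or> finite_supp K"
  obtains Bd P where "\<And>a b i c d. i \<in> K (a - c) (b - d) \<Longrightarrow> EK i c d \<noteq> {} \<Longrightarrow> Bd \<le> b"
    and "\<And>b. finite (P b)" and "\<And>a b i c d. i \<in> K (a - c) (b - d) \<Longrightarrow> EK i c d \<noteq> {} \<Longrightarrow> (i, d) \<in> P b"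
proof -
  obtain B AF where hK: "\<And>a b. K a b \<noteq> {} \<Longrightarrow> B \<le> b" "\<And>a b. K a b \<noteq> {} \<Longrightarrow> AF b \<le> a"
     "\<And>b. finite (\<Union>a. K a b)" using laurent_suppE[OF K] by blast
  obtain m where m: "\<And>a b i c d. i \<in> K (a - c) (b - d) \<Longrightarrow> EK i c d \<noteq> {} \<Longrightarrow> m \<le> d"
  proof (cases "nonneg_supp EK")
    case True
    then show ?thesis using that[of 0] unfolding nonneg_supp_def by blast
  next
    case False
    then have fin: "finite (\<Union>a. \<Union>b. K a b)" using alt unfolding finite_supp_def by blast
    obtain BE AE where hE: "\<And>i a b. EK i a b \<noteq> {} \<Longrightarrow> BE i \<le> b" "\<And>i a b. EK i a b \<noteq> {} \<Longrightarrow> AE i b \<le> a"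
       "\<And>i b. finite (\<Union>a. EK i a b)" using laurent_supp_familyE[OF E] by blast
    obtain m0 where m0: "\<forall>i\<in>(\<Union>a. \<Union>b. K a b). m0 \<le> BE i" using finite_lower_bound[OF fin] by blast
    have "m0 \<le> d" if "i \<in> K (a - c) (b - d)" "EK i c d \<noteq> {}" for a b i c d
    proof -
      have "m0 \<le> BE i" using m0 that(1) by blast
      moreover have "BE i \<le> d" using hE(1) that(2) by blast
      ultimately show ?thesis by simp
    qed
    then show ?thesis by (rule that)
  qed
  let ?P = "\<lambda>b. \<Union>d\<in>{m..b - B}. (\<lambda>i. (i, d)) ` (\<Union>a. K a (b - d))"
  show ?thesis
  proof (rule that[of "B + m" ?P])
    fix a b i c d assume h: "i \<in> K (a - c) (b - d)" "EK i c d \<noteq> {}"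
    then have "B \<le> b - d" "m \<le> d" using hK(1)[of "a - c" "b - d"] m by blast+
    then show "B + m \<le> b" by simp
    show "(i, d) \<in> ?P b"
      using h \<open>B \<le> b - d\<close> \<open>m \<le> d\<close> by (intro UN_I[of d] image_eqI[of _ _ i] UN_I[of "a - c"]) auto
  next
    show "finite (?P b)" for b
      by (rule finite_UN_I[OF finite_atLeastAtMost_int finite_imageI[OF hK(3)]])
  qed
qed

lemma supp_comp_finite:
  assumes K: "laurent_supp K" and E: "\<forall>i. laurent_supp (EK i)" and alt: "nonneg_supp EK \<or> finite_supp K"
  shows "finite {(i, c, d). i \<in> K (a - c) (b - d) \<and> EK i c d \<noteq> {}}"
proof -
  obtain B AF where hK: "\<And>a b. K a b \<noteq> {} \<Longrightarrow> B \<le> b" "\<And>a b. K a b \<noteq> {} \<Longrightarrow> AF b \<le> a"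
     "\<And>b. finite (\<Union>a. K a b)" using laurent_suppE[OF K] by blast
  obtain BE AE where hE: "\<And>i a b. EK i a b \<noteq> {} \<Longrightarrow> BE i \<le> b" "\<And>i a b. EK i a b \<noteq> {} \<Longrightarrow> AE i b \<le> a"
     "\<And>i b. finite (\<Union>a. EK i a b)" using laurent_supp_familyE[OF E] by blast
  obtain Bd P where "\<And>a b i c d. i \<in> K (a - c) (b - d) \<Longrightarrow> EK i c d \<noteq> {} \<Longrightarrow> Bd \<le> b"
    and P: "\<And>b. finite (P b)" "\<And>a b i c d. i \<in> K (a - c) (b - d) \<Longrightarrow> EK i c d \<noteq> {} \<Longrightarrow> (i, d) \<in> P b"
    by (rule supp_comp_region[OF K E alt]) blast
  have "{(i, c, d). i \<in> K (a - c) (b - d) \<and> EK i c d \<noteq> {}} \<subseteq>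
     (\<Union>p\<in>P b. (\<lambda>c. (fst p, c, snd p)) ` {AE (fst p) (snd p)..a - AF (b - snd p)})"
  proof (rule subsetI)
    fix x assume "x \<in> {(i, c, d). i \<in> K (a - c) (b - d) \<and> EK i c d \<noteq> {}}"
    then obtain i c d where x: "x = (i, c, d)" and h: "i \<in> K (a - c) (b - d)" "EK i c d \<noteq> {}" by blast
    then have "(i, d) \<in> P b" "AF (b - d) \<le> a - c" "AE i d \<le> c" using P(2) hK(2) hE(2) by blast+
    then show "x \<in> (\<Union>p\<in>P b. (\<lambda>c. (fst p, c, snd p)) ` {AE (fst p) (snd p)..a - AF (b - snd p)})"
      unfolding x by (intro UN_I[of "(i, d)"] image_eqI[of _ _ c]) simp_all
  qed
  moreover have "finite (\<Union>p\<in>P b. (\<lambda>c. (fst p, c, snd p)) ` {AE (fst p) (snd p)..a - AF (b - snd p)})"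
    by (rule finite_UN_I[OF P(1)]) simp
  ultimately show ?thesis by (rule finite_subset)
qed

lemma laurent_supp_comp:
  assumes K: "laurent_supp K" and E: "\<forall>i. laurent_supp (EK i)" and alt: "nonneg_supp EK \<or> finite_supp K"
  shows "laurent_supp (supp_comp K EK)"
proof -
  obtain B AF where hK: "\<And>a b. K a b \<noteq> {} \<Longrightarrow> B \<le> b" "\<And>a b. K a b \<noteq> {} \<Longrightarrow> AF b \<le> a"
     "\<And>b. finite (\<Union>a. K a b)" using laurent_suppE[OF K] by blast
  obtain BE AE where hE: "\<And>i a b. EK i a b \<noteq> {} \<Longrightarrow> BE i \<le> b" "\<And>i a b. EK i a b \<noteq> {} \<Longrightarrow> AE i b \<le> a"
     "\<And>i b. finite (\<Union>a. EK i a b)" using laurent_supp_familyE[OF E] by blast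
  obtain Bd P where Bd: "\<And>a b i c d. i \<in> K (a - c) (b - d) \<Longrightarrow> EK i c d \<noteq> {} \<Longrightarrow> Bd \<le> b"
    and P: "\<And>b. finite (P b)" "\<And>a b i c d. i \<in> K (a - c) (b - d) \<Longrightarrow> EK i c d \<noteq> {} \<Longrightarrow> (i, d) \<in> P b"
    by (rule supp_comp_region[OF K E alt]) blast
  have "\<exists>A. \<forall>a. supp_comp K EK a b \<noteq> {} \<longrightarrow> A \<le> a" for b
  proof -
    obtain m where m: "\<forall>p\<in>P b. m \<le> AF (b - snd p) + AE (fst p) (snd p)"
      using finite_lower_bound[OF P(1), of b "\<lambda>p. AF (b - snd p) + AE (fst p) (snd p)"] by blast
    have "m \<le> a" if ne: "supp_comp K EK a b \<noteq> {}" for a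
    proof -
      obtain i c d k where h: "i \<in> K (a - c) (b - d)" "k \<in> EK i c d"
        using ne unfolding supp_comp_def by blast
      then have "m \<le> AF (b - d) + AE i d" using m P(2) by force
      moreover have "AF (b - d) \<le> a - c" "AE i d \<le> c" using hK(2) hE(2) h by blast+
      ultimately show "m \<le> a" by simp
    qed
    then show ?thesis by blast
  qed
  moreover have "finite (\<Union>a. supp_comp K EK a b)" for b
  proof (rule finite_subset)
    show "(\<Union>a. supp_comp K EK a b) \<subseteq> (\<Union>p\<in>P b. \<Union>c. EK (fst p) c (snd p))"
      unfolding supp_comp_def using P(2) by fastforce
    show "finite (\<Union>p\<in>P b. \<Union>c. EK (fst p) c (snd p))"
      by (rule finite_UN_I[OF P(1)]) (rule hE(3))
  qed
  moreover have "\<exists>B. \<forall>a b. supp_comp K EK a b \<noteq> {} \<longrightarrow> B \<le> b"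
    using Bd unfolding supp_comp_def by blast
  ultimately show ?thesis unfolding laurent_supp_def by blast
qed

lemma finite_supp_comp:
  assumes "finite_supp K" "\<forall>i. finite_supp (EK i)"
  shows "finite_supp (supp_comp K EK)"
proof -
  have "(\<Union>a. \<Union>b. supp_comp K EK a b) \<subseteq> (\<Union>i\<in>(\<Union>a. \<Union>b. K a b). \<Union>c. \<Union>d. EK i c d)"
    unfolding supp_comp_def by blast
  moreover have "finite (\<Union>i\<in>(\<Union>a. \<Union>b. K a b). \<Union>c. \<Union>d. EK i c d)"
  proof (rule finite_UN_I)
    show "finite (\<Union>a. \<Union>b. K a b)" using assms(1) unfolding finite_supp_def .
    show "finite (\<Union>c. \<Union>d. EK i c d)" for i using assms(2) unfolding finite_supp_def by blast
  qed
  ultimately show ?thesis unfolding finite_supp_def by (rule finite_subset)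
qed

lemma laurent_supp_mono: "(\<And>a b. K a b \<subseteq> K' a b) \<Longrightarrow> laurent_supp K' \<Longrightarrow> laurent_supp K"
  unfolding laurent_supp_def
proof (elim conjE exE, intro conjI allI)
  fix B assume sub: "\<And>a b. K a b \<subseteq> K' a b" and h1: "\<forall>a b. K' a b \<noteq> {} \<longrightarrow> B \<le> b"
    and h2: "\<forall>b. \<exists>A. \<forall>a. K' a b \<noteq> {} \<longrightarrow> A \<le> a" and h3: "\<forall>b. finite (\<Union>a. K' a b)"
  show "\<exists>B. \<forall>a b. K a b \<noteq> {} \<longrightarrow> B \<le> b" using h1 sub by blast
  show "\<exists>A. \<forall>a. K a b \<noteq> {} \<longrightarrow> A \<le> a" for b using h2 sub by blast
  show "finite (\<Union>a. K a b)" for b using h3 sub by (meson UN_mono finite_subset order_refl)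
qed

lemma finite_supp_mono: "(\<And>a b. K a b \<subseteq> K' a b) \<Longrightarrow> finite_supp K' \<Longrightarrow> finite_supp K"
  unfolding finite_supp_def by (erule rev_finite_subset) (meson UN_mono subset_refl)

definition supp_of :: "'i ser2 \<Rightarrow> 'i supp2" where
  "supp_of F = (\<lambda>a b. Poly_Mapping.keys (F a b))"

definition op_supp :: "('i \<Rightarrow> 'j ser2) \<Rightarrow> 'i \<Rightarrow> 'j supp2" where
  "op_supp E = (\<lambda>i. supp_of (E i))"

definition laurent :: "'i ser2 \<Rightarrow> bool" where
  "laurent F \<longleftrightarrow> laurent_supp (supp_of F)"

definition fin_indexed :: "'i ser2 \<Rightarrow> bool" where
  "fin_indexed F \<longleftrightarrow> finite_supp (supp_of F)"

definition laurent_op :: "('i \<Rightarrow> 'j ser2) \<Rightarrow> bool" where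
  "laurent_op E \<longleftrightarrow> (\<forall>i. laurent (E i))"

definition fin_indexed_op :: "('i \<Rightarrow> 'j ser2) \<Rightarrow> bool" where
  "fin_indexed_op E \<longleftrightarrow> (\<forall>i. fin_indexed (E i))"

definition nonneg_op :: "('i \<Rightarrow> 'j ser2) \<Rightarrow> bool" where
  "nonneg_op E \<longleftrightarrow> (\<forall>i c d. E i c d \<noteq> 0 \<longrightarrow> 0 \<le> d)"

lemma nonneg_op_supp: "nonneg_op E \<Longrightarrow> nonneg_supp (op_supp E)"
  unfolding nonneg_op_def nonneg_supp_def op_supp_def supp_of_def by (auto simp: keys_empty_iff)

lemma laurent_op_supp: "laurent_op E \<Longrightarrow> \<forall>i. laurent_supp (op_supp E i)"
  unfolding laurent_op_def laurent_def op_supp_def by simp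

lemma keys_app_subset: "Poly_Mapping.keys (app E F a b) \<subseteq> supp_comp (supp_of F) (op_supp E) a b"
proof
  fix k assume k: "k \<in> Poly_Mapping.keys (app E F a b)"
  let ?f = "\<lambda>(i, c, d). smul (Poly_Mapping.lookup (F (a - c) (b - d)) i) (E i c d)"
  have fin: "finite {x. ?f x \<noteq> 0}"
  proof (rule ccontr)
    assume "infinite {x. ?f x \<noteq> 0}"
    then have "app E F a b = 0" unfolding app_def by simp
    with k show False by simp
  qed
  have "Sum_any (\<lambda>x. Poly_Mapping.lookup (?f x) k) \<noteq> 0"
    using k unfolding app_def lookup_Sum_any[OF fin, symmetric] by (simp add: in_keys_iff)
  then obtain x where "Poly_Mapping.lookup (?f x) k \<noteq> 0" using Sum_any_nonzero_ex by blast
  then obtain i c d where "Poly_Mapping.lookup (F (a - c) (b - d)) i \<noteq> 0" "Poly_Mapping.lookup (E i c d) k \<noteq> 0"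
    by (cases x) auto
  then show "k \<in> supp_comp (supp_of F) (op_supp E) a b"
    unfolding supp_comp_def supp_of_def op_supp_def by (auto simp: in_keys_iff)
qed

lemma app_finite_laurent:
  assumes "laurent F" "laurent_op E" "nonneg_op E \<or> fin_indexed F"
  shows "app_finite E F"
  unfolding app_finite_def
proof (intro allI)
  fix a b
  have "finite {(i, c, d). i \<in> supp_of F (a - c) (b - d) \<and> op_supp E i c d \<noteq> {}}"
    by (rule supp_comp_finite) (use assms nonneg_op_supp laurent_op_supp in \<open>auto simp: laurent_def fin_indexed_def\<close>)
  then show "finite {(i, c, d). Poly_Mapping.lookup (F (a - c) (b - d)) i \<noteq> 0 \<and> E i c d \<noteq> 0}"
    by (rule rev_finite_subset) (auto simp: supp_of_def op_supp_def in_keys_iff keys_empty_iff)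
qed

lemma laurent_app:
  assumes "laurent F" "laurent_op E" "nonneg_op E \<or> fin_indexed F"
  shows "laurent (app E F)"
proof -
  have "laurent_supp (supp_comp (supp_of F) (op_supp E))"
    by (rule laurent_supp_comp) (use assms nonneg_op_supp laurent_op_supp in \<open>auto simp: laurent_def fin_indexed_def\<close>)
  then show ?thesis unfolding laurent_def
    by (rule laurent_supp_mono[rotated]) (simp add: keys_app_subset supp_of_def[of "app E F"])
qed

lemma fin_indexed_app:
  assumes "fin_indexed F" "fin_indexed_op E"
  shows "fin_indexed (app E F)"
proof -
  have "finite_supp (supp_comp (supp_of F) (op_supp E))"
    by (rule finite_supp_comp) (use assms in \<open>auto simp: fin_indexed_def fin_indexed_op_def op_supp_def\<close>)
  then show ?thesis unfolding fin_indexed_def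
    by (rule finite_supp_mono[rotated]) (simp add: keys_app_subset supp_of_def[of "app E F"])
qed

lemma app_assoc_finite_laurent:
  assumes F: "laurent F" and E': "laurent_op E'" and E: "laurent_op E" and a1: "nonneg_op E' \<or> fin_indexed F"
    and a2: "nonneg_op E \<or> (fin_indexed F \<and> fin_indexed_op E')"
  shows "app_assoc_finite E E' F"
  unfolding app_assoc_finite_def
proof (intro allI)
  fix a b
  let ?K = "supp_comp (supp_of F) (op_supp E')"
  have sK: "laurent_supp ?K"
    by (rule laurent_supp_comp) (use F E' a1 nonneg_op_supp laurent_op_supp in \<open>auto simp: laurent_def fin_indexed_def\<close>)
  have "nonneg_supp (op_supp E) \<or> finite_supp ?K"
    using a2 nonneg_op_supp finite_supp_comp[of "supp_of F" "op_supp E'"]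
    by (auto simp: fin_indexed_def fin_indexed_op_def op_supp_def)
  then have finP: "finite {(i, c, d). i \<in> ?K (a - c) (b - d) \<and> op_supp E i c d \<noteq> {}}"
    by (rule supp_comp_finite[OF sK laurent_op_supp[OF E]])
  have fQ: "app_finite E' F" by (rule app_finite_laurent[OF F E' a1])
  let ?Q = "\<lambda>(i, c, d). (\<lambda>(j, c', d'). (j, c', d', i, c, d)) `
      {(j, c', d'). Poly_Mapping.lookup (F (a - c - c') (b - d - d')) j \<noteq> 0 \<and> E' j c' d' \<noteq> 0}"
  let ?U = "\<Union>p\<in>{(i, c, d). i \<in> ?K (a - c) (b - d) \<and> op_supp E i c d \<noteq> {}}. ?Q p"
  have finU: "finite ?U"
  proof (rule finite_UN_I[OF finP])
    fix p show "finite (?Q p)"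
      using fQ unfolding app_finite_def by (cases p) simp
  qed
  show "finite {(j, c', d', i, c, d).
     Poly_Mapping.lookup (F (a - c - c') (b - d - d')) j \<noteq> 0 \<and>
     Poly_Mapping.lookup (E' j c' d') i \<noteq> 0 \<and> E i c d \<noteq> 0}"
  proof (rule finite_subset[OF subsetI finU])
    fix x assume "x \<in> {(j, c', d', i, c, d).
     Poly_Mapping.lookup (F (a - c - c') (b - d - d')) j \<noteq> 0 \<and>
     Poly_Mapping.lookup (E' j c' d') i \<noteq> 0 \<and> E i c d \<noteq> 0}"
    then obtain j c' d' i c d where x: "x = (j, c', d', i, c, d)" and
      h: "Poly_Mapping.lookup (F (a - c - c') (b - d - d')) j \<noteq> 0"
         "Poly_Mapping.lookup (E' j c' d') i \<noteq> 0" "E i c d \<noteq> 0" by blast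
    have "i \<in> ?K (a - c) (b - d)" unfolding supp_comp_def supp_of_def op_supp_def
      using h(1,2) by (auto simp: in_keys_iff)
    moreover have "op_supp E i c d \<noteq> {}" using h(3) by (simp add: op_supp_def supp_of_def keys_empty_iff)
    moreover have "E' j c' d' \<noteq> 0" using h(2) by auto
    ultimately show "x \<in> ?U"
      unfolding x using h(1)
      by (intro UN_I[of "(i, c, d)"]) (auto intro!: image_eqI[of _ _ "(j, c', d')"])
  qed
qed

lemma app_assoc_laurent:
  assumes "laurent F" "laurent_op E'" "laurent_op E" "nonneg_op E' \<or> fin_indexed F"
    "nonneg_op E \<or> (fin_indexed F \<and> fin_indexed_op E')"
  shows "app E (app E' F) = app (op_comp E E') F"
  by (rule app_assoc[OF app_finite_laurent[OF assms(1,2,4)] app_assoc_finite_laurent[OF assms]])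

lemma op_comp_assoc:
  assumes "laurent_op E''" "laurent_op E'" "laurent_op E" "nonneg_op E' \<or> fin_indexed_op E''"
    "nonneg_op E \<or> (fin_indexed_op E'' \<and> fin_indexed_op E')"
  shows "op_comp E (op_comp E' E'') = op_comp (op_comp E E') E''"
proof
  fix j
  have "app E (app E' (E'' j)) = app (op_comp E E') (E'' j)"
    by (rule app_assoc_laurent) (use assms in \<open>auto simp: laurent_op_def fin_indexed_op_def\<close>)
  then show "op_comp E (op_comp E' E'') j = op_comp (op_comp E E') E'' j" unfolding op_comp_def .
qed

lemma laurent_op_comp:
  assumes "laurent_op E'" "laurent_op E" "nonneg_op E \<or> fin_indexed_op E'"
  shows "laurent_op (op_comp E E')"
  unfolding laurent_op_def op_comp_def
  by (intro allI laurent_app) (use assms in \<open>auto simp: laurent_op_def fin_indexed_op_def\<close>)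

lemma fin_indexed_op_comp: "fin_indexed_op E' \<Longrightarrow> fin_indexed_op E \<Longrightarrow> fin_indexed_op (op_comp E E')"
  unfolding fin_indexed_op_def op_comp_def by (simp add: fin_indexed_app fin_indexed_op_def)

lemma nonneg_op_comp: "nonneg_op E' \<Longrightarrow> nonneg_op E \<Longrightarrow> nonneg_op (op_comp E E')"
  unfolding nonneg_op_def op_comp_def
proof (intro allI impI)
  fix j c d assume h1: "\<forall>i c d. E' i c d \<noteq> 0 \<longrightarrow> 0 \<le> d" and h2: "\<forall>i c d. E i c d \<noteq> 0 \<longrightarrow> 0 \<le> d"
    and "app E (E' j) c d \<noteq> 0"
  then obtain i c1 d1 where "E' j (c - c1) (d - d1) \<noteq> 0" "E i c1 d1 \<noteq> 0"
    by (metis app_nonzero_ex lookup_zero)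
  then show "0 \<le> d" using h1 h2 by force
qed

definition regular_op :: "('i \<Rightarrow> 'j ser2) \<Rightarrow> bool" where
  "regular_op E \<longleftrightarrow> laurent_op E \<and> fin_indexed_op E \<and> nonneg_op E"

lemma regular_op_comp: "regular_op E \<Longrightarrow> regular_op E' \<Longrightarrow> regular_op (op_comp E E')"
  unfolding regular_op_def by (auto intro: laurent_op_comp fin_indexed_op_comp nonneg_op_comp)

lemma regular_op_laurent: "regular_op E \<Longrightarrow> laurent_op E"
  unfolding regular_op_def by simp

lemma laurent_op_comp_regular: "laurent_op E \<Longrightarrow> regular_op E' \<Longrightarrow> laurent_op (op_comp E E')"
  unfolding regular_op_def by (rule laurent_op_comp) auto

lemma op_comp_assoc_regular12:
  "regular_op E \<Longrightarrow> regular_op E' \<Longrightarrow> laurent_op E'' \<Longrightarrow> op_comp E (op_comp E' E'') = op_comp (op_comp E E') E''"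
  unfolding regular_op_def by (rule op_comp_assoc) auto

lemma op_comp_assoc_regular23:
  "laurent_op E \<Longrightarrow> regular_op E' \<Longrightarrow> regular_op E'' \<Longrightarrow> op_comp E (op_comp E' E'') = op_comp (op_comp E E') E''"
  unfolding regular_op_def by (rule op_comp_assoc) auto

lemma op_comp_assoc_regular13:
  "regular_op E \<Longrightarrow> laurent_op E' \<Longrightarrow> regular_op E'' \<Longrightarrow> op_comp E (op_comp E' E'') = op_comp (op_comp E E') E''"
  unfolding regular_op_def by (rule op_comp_assoc) auto

lemma op_comp_assoc4_regular:
  assumes "regular_op A" "regular_op B" "regular_op C" "regular_op D" "laurent_op G"
  shows "op_comp A (op_comp B (op_comp C (op_comp D G))) = op_comp (op_comp A (op_comp B (op_comp C D))) G"
  using assms by (simp add: op_comp_assoc_regular12 regular_op_comp)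

definition vec_map :: "('i \<Rightarrow> 'j) \<Rightarrow> 'i vec \<Rightarrow> 'j vec" where
  "vec_map h v = Sum_any (\<lambda>i. smul (Poly_Mapping.lookup v i) (bv (h i)))"

lemma lookup_vec_map_Sum_any: "Poly_Mapping.lookup (vec_map h v) k = Sum_any (\<lambda>i. Poly_Mapping.lookup v i * (if h i = k then 1 else 0))"
proof -
  have "finite {i. smul (Poly_Mapping.lookup v i) (bv (h i)) \<noteq> 0}"
    by (rule finite_subset[of _ "Poly_Mapping.keys v"]) (auto simp: in_keys_iff)
  then show ?thesis unfolding vec_map_def by (simp add: lookup_Sum_any lookup_bv eq_commute[of k])
qed

lemma lookup_vec_map: "inj h \<Longrightarrow> Poly_Mapping.lookup (vec_map h v) (h i) = Poly_Mapping.lookup v i"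
  unfolding lookup_vec_map_Sum_any by (simp add: inj_eq mult_when[symmetric] if_distrib cong: if_cong)

lemma lookup_vec_map_notin_range: "k \<notin> range h \<Longrightarrow> Poly_Mapping.lookup (vec_map h v) k = 0"
proof -
  assume "k \<notin> range h"
  then have "\<forall>i. h i \<noteq> k" by auto
  then show ?thesis unfolding lookup_vec_map_Sum_any by simp
qed

lemma vec_map_eq_iff: "inj h \<Longrightarrow> vec_map h u = vec_map h v \<longleftrightarrow> u = v"
proof
  assume "inj h" "vec_map h u = vec_map h v"
  then show "u = v" by (metis lookup_vec_map poly_mapping_eqI)
qed simp

lemma vec_map_zero[simp]: "vec_map h 0 = 0"
  unfolding vec_map_def by simp

lemma vec_map_eq_0_iff: "inj h \<Longrightarrow> vec_map h v = 0 \<longleftrightarrow> v = 0"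
  using vec_map_eq_iff[of h v 0] by simp

lemma vec_map_smul: "vec_map h (smul c v) = smul c (vec_map h v)"
proof (rule poly_mapping_eqI)
  fix k
  have "Sum_any (\<lambda>i. c * Poly_Mapping.lookup v i * (if h i = k then 1 else 0)) =
        c * Sum_any (\<lambda>i. Poly_Mapping.lookup v i * (if h i = k then 1 else 0))"
    by (simp add: Sum_any_right_distrib_idom mult.assoc)
  then show "Poly_Mapping.lookup (vec_map h (smul c v)) k = Poly_Mapping.lookup (smul c (vec_map h v)) k"
    by (simp add: lookup_vec_map_Sum_any)
qed

lemma vec_map_Sum_any:
  assumes inj: "inj h"
  shows "vec_map h (Sum_any f) = Sum_any (\<lambda>x. vec_map h (f x))"
proof (cases "finite {x. f x \<noteq> 0}")
  case True
  have fin2: "finite {x. vec_map h (f x) \<noteq> 0}" using True vec_map_eq_0_iff[OF inj] by simp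
  show ?thesis
  proof (rule poly_mapping_eqI)
    fix k
    show "Poly_Mapping.lookup (vec_map h (Sum_any f)) k = Poly_Mapping.lookup (Sum_any (\<lambda>x. vec_map h (f x))) k"
    proof (cases "k \<in> range h")
      case True
      then obtain i where k: "k = h i" by blast
      show ?thesis unfolding k lookup_vec_map[OF inj] lookup_Sum_any[OF fin2] lookup_Sum_any[OF \<open>finite {x. f x \<noteq> 0}\<close>]
        by simp
    next
      case False
      then show ?thesis unfolding lookup_Sum_any[OF fin2] by (simp add: lookup_vec_map_notin_range)
    qed
  qed
next
  case False
  then have "infinite {x. vec_map h (f x) \<noteq> 0}" using vec_map_eq_0_iff[OF inj] by simp
  with False show ?thesis by simp
qed

lemma vec_map_bv: "vec_map h (bv i) = bv (h i)"
proof -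
  have "Sum_any (\<lambda>j. smul (Poly_Mapping.lookup (bv i) j) (bv (h j))) = Sum_any (\<lambda>j. if j = i then bv (h j) else 0)"
    by (rule Sum_any.cong) (simp add: lookup_bv)
  then show ?thesis unfolding vec_map_def by simp
qed

lemma vec_map_id: "vec_map (\<lambda>x. x) v = v"
  by (rule poly_mapping_eqI) (metis lookup_vec_map inj_on_id2)

lemma vec_map_vec_map: "inj g \<Longrightarrow> inj h \<Longrightarrow> vec_map g (vec_map h v) = vec_map (\<lambda>x. g (h x)) v"
proof (rule poly_mapping_eqI)
  fix k assume g: "inj g" and h: "inj h"
  have gh: "inj (\<lambda>x. g (h x))" using g h by (simp add: inj_def)
  show "Poly_Mapping.lookup (vec_map g (vec_map h v)) k = Poly_Mapping.lookup (vec_map (\<lambda>x. g (h x)) v) k"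
  proof (cases "k \<in> range (\<lambda>x. g (h x))")
    case True
    then obtain i where "k = g (h i)" by blast
    then show ?thesis using lookup_vec_map[OF g] lookup_vec_map[OF h] lookup_vec_map[OF gh] by simp
  next
    case False
    show ?thesis
    proof (cases "k \<in> range g")
      case True
      then obtain j where j: "k = g j" by blast
      then have "j \<notin> range h" using False by blast
      then show ?thesis using j False lookup_vec_map[OF g] lookup_vec_map_notin_range by metis
    next
      case False
      then show ?thesis using \<open>k \<notin> range (\<lambda>x. g (h x))\<close> lookup_vec_map_notin_range by metis
    qed
  qed
qed

lemma app_vec_map_right:
  assumes inj: "inj h"
  shows "app E (\<lambda>x y. vec_map h (G x y)) = app (\<lambda>k. E (h k)) G"
proof (intro ext)
  fix a b
  let ?f = "\<lambda>(i, c, d). smul (Poly_Mapping.lookup (vec_map h (G (a - c) (b - d))) i) (E i c d)"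
  have "app E (\<lambda>x y. vec_map h (G x y)) a b = Sum_any (\<lambda>y. ?f ((\<lambda>(k, c, d). (h k, c, d)) y))"
    unfolding app_def
    by (rule Sum_any_inj_reindex) (auto simp: inj_def inj_eq[OF inj] lookup_vec_map_notin_range image_iff split: prod.splits)
  also have "\<dots> = Sum_any (\<lambda>(k, c, d). smul (Poly_Mapping.lookup (vec_map h (G (a - c) (b - d))) (h k)) (E (h k) c d))"
    by (rule Sum_any.cong) (simp split: prod.splits)
  also have "\<dots> = app (\<lambda>k. E (h k)) G a b"
    unfolding app_def lookup_vec_map[OF inj] ..
  finally show "app E (\<lambda>x y. vec_map h (G x y)) a b = app (\<lambda>k. E (h k)) G a b" .
qed

lemma app_vec_map_left:
  assumes inj: "inj h"
  shows "app (\<lambda>k x y. vec_map h (E k x y)) G = (\<lambda>x y. vec_map h (app E G x y))"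
  unfolding app_def by (simp add: vec_map_Sum_any[OF inj] vec_map_smul case_prod_beta)

definition reindex_op :: "('i \<Rightarrow> 'j) \<Rightarrow> 'i \<Rightarrow> 'j ser2" where
  "reindex_op p = (\<lambda>i. const2 (bv (p i)))"

lemma op_comp_reindex_op: "op_comp E (reindex_op p) = (\<lambda>i. E (p i))"
  unfolding op_comp_def reindex_op_def by simp

lemma app_reindex_op: "app (reindex_op p) G = (\<lambda>a b. vec_map p (G a b))"
proof (intro ext)
  fix a b
  have "app (reindex_op p) G a b = Sum_any (\<lambda>i. smul (Poly_Mapping.lookup (G a b) i) (bv (p i)))"
    unfolding app_def reindex_op_def
    by (subst Sum_any_inj_reindex[where h = "\<lambda>i. (i, 0, 0)"]) (auto simp: inj_def const2_def image_iff)
  then show "app (reindex_op p) G a b = vec_map p (G a b)" unfolding vec_map_def .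
qed

lemma app_reindex_op_const2: "app (reindex_op p) (const2 t) = const2 (vec_map p t)"
  unfolding app_reindex_op const2_def by (auto simp: fun_eq_iff)

lemma reindex_op_op_comp: "inj p \<Longrightarrow> inj q \<Longrightarrow> op_comp (reindex_op p) (op_comp (reindex_op q) E) = op_comp (reindex_op (\<lambda>x. p (q x))) E"
  unfolding op_comp_def app_reindex_op by (simp add: vec_map_vec_map fun_eq_iff)

definition id_op :: "'i \<Rightarrow> 'i ser2" where "id_op = (\<lambda>j. const2 (bv j))"

lemma id_op_reindex_op: "id_op = reindex_op (\<lambda>x. x)" unfolding id_op_def reindex_op_def by simp

lemma app_id_op[simp]: "app id_op G = G"
  unfolding id_op_reindex_op app_reindex_op vec_map_id ..

lemma op_comp_id_op_left[simp]: "op_comp id_op E = E" unfolding op_comp_def by simp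

lemma op_comp_id_op_right[simp]: "op_comp E id_op = E" unfolding op_comp_def id_op_def by simp

lemma flip_reindex_op: "flip = reindex_op prod.swap"
  unfolding flip_def reindex_op_def prod.swap_def by (auto simp: fun_eq_iff)

lemma app_flip: "app flip G = (\<lambda>a b. vec_map prod.swap (G a b))"
  unfolding flip_reindex_op app_reindex_op ..

lemma app_flip_const2: "app flip (const2 t) = const2 (vec_map prod.swap t)"
  unfolding flip_reindex_op app_reindex_op_const2 ..

lemma op_comp_flip_flip: "op_comp flip flip = id_op"
  unfolding flip_reindex_op op_comp_reindex_op by (auto simp: fun_eq_iff id_op_def reindex_op_def prod.swap_def)

lemma lookup_tens: "Poly_Mapping.lookup (tens u v) (i, j) = Poly_Mapping.lookup u i * Poly_Mapping.lookup v j"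
proof -
  have fin: "finite {x. (\<lambda>(i, j). smul (Poly_Mapping.lookup u i * Poly_Mapping.lookup v j) (bv (i, j))) x \<noteq> 0}"
    by (rule finite_subset[of _ "Poly_Mapping.keys u \<times> Poly_Mapping.keys v"]) (auto simp: in_keys_iff)
  have "Poly_Mapping.lookup (tens u v) (i, j) =
     Sum_any (\<lambda>x. if x = (i, j) then Poly_Mapping.lookup u i * Poly_Mapping.lookup v j else 0)"
    unfolding tens_def lookup_Sum_any[OF fin] by (rule Sum_any.cong) (auto simp: lookup_bv split: if_splits)
  then show ?thesis by simp
qed

lemma tens_bv_right: "tens u (bv c) = vec_map (\<lambda>k. (k, c)) u"
proof (rule poly_mapping_eqI)
  fix x show "Poly_Mapping.lookup (tens u (bv c)) x = Poly_Mapping.lookup (vec_map (\<lambda>k. (k, c)) u) x"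
  proof (cases x)
    case (Pair i j)
    have inj: "inj (\<lambda>k. (k, c))" by (simp add: inj_def)
    show ?thesis
    proof (cases "j = c")
      case True then show ?thesis using Pair by (simp add: lookup_tens lookup_bv lookup_vec_map[OF inj])
    next
      case False then show ?thesis using Pair lookup_vec_map_notin_range[of x "\<lambda>k. (k, c)"] by (auto simp: lookup_tens lookup_bv)
    qed
  qed
qed

lemma tens_bv_left: "tens (bv a) v = vec_map (\<lambda>k. (a, k)) v"
proof (rule poly_mapping_eqI)
  fix x show "Poly_Mapping.lookup (tens (bv a) v) x = Poly_Mapping.lookup (vec_map (\<lambda>k. (a, k)) v) x"
  proof (cases x)
    case (Pair i j)
    have inj: "inj (\<lambda>k. (a, k))" by (simp add: inj_def)
    show ?thesis
    proof (cases "i = a")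
      case True then show ?thesis using Pair by (simp add: lookup_tens lookup_bv lookup_vec_map[OF inj])
    next
      case False then show ?thesis using Pair lookup_vec_map_notin_range[of x "\<lambda>k. (a, k)"] by (auto simp: lookup_tens lookup_bv)
    qed
  qed
qed

lemma vec_map_swap_tens:
  fixes u :: "'a vec" and v :: "'b vec"
  shows "vec_map prod.swap (tens u v) = tens v u"
proof (rule poly_mapping_eqI)
  fix x :: "'b \<times> 'a"
  obtain i j where x: "x = (i, j)" by (cases x)
  show "Poly_Mapping.lookup (vec_map prod.swap (tens u v)) x = Poly_Mapping.lookup (tens v u) x"
    using lookup_vec_map[OF inj_swap, of "tens u v" "(j, i)"] by (simp add: lookup_tens x mult.commute)
qed

lemma vec_map_const2: "(\<lambda>cc dd. vec_map h (const2 t cc dd)) = const2 (vec_map h t)"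
  unfolding const2_def by (auto simp: fun_eq_iff)

lemma laurent_const2: "laurent (const2 t)"
  unfolding laurent_def laurent_supp_def supp_of_def const2_def
proof (intro conjI allI)
  show "\<exists>B. \<forall>a b. Poly_Mapping.keys (if a = 0 \<and> b = 0 then t else 0) \<noteq> {} \<longrightarrow> B \<le> (b::int)"
    by (rule exI[of _ "0::int"]) auto
  show "\<exists>A. \<forall>a. Poly_Mapping.keys (if a = 0 \<and> b = 0 then t else 0) \<noteq> {} \<longrightarrow> A \<le> (a::int)" for b
    by (rule exI[of _ "0::int"]) auto
  show "finite (\<Union>a. Poly_Mapping.keys (if a = 0 \<and> b = (0::int) then t else 0))" for b
  proof -
    have "(\<Union>a. Poly_Mapping.keys (if a = 0 \<and> b = (0::int) then t else 0)) \<subseteq> Poly_Mapping.keys t" by (auto split: if_splits)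
    then show ?thesis by (rule finite_subset) simp
  qed
qed

lemma fin_indexed_const2: "fin_indexed (const2 t)"
  unfolding fin_indexed_def finite_supp_def supp_of_def const2_def
proof -
  have "(\<Union>a. \<Union>b. Poly_Mapping.keys (if a = 0 \<and> b = (0::int) then t else 0)) \<subseteq> Poly_Mapping.keys t" by (auto split: if_splits)
  then show "finite (\<Union>a. \<Union>b. Poly_Mapping.keys (if a = 0 \<and> b = (0::int) then t else 0))" by (rule finite_subset) simp
qed

lemma regular_reindex_op: "regular_op (reindex_op p)"
  unfolding regular_op_def laurent_op_def fin_indexed_op_def nonneg_op_def reindex_op_def
  using laurent_const2 fin_indexed_const2 by (auto simp: const2_def)

lemma regular_id_op: "regular_op id_op"
  unfolding id_op_reindex_op by (rule regular_reindex_op)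

lemma regular_flip: "regular_op flip"
  unfolding flip_reindex_op by (rule regular_reindex_op)

definition admissible_coeff :: "cser2 \<Rightarrow> bool" where
  "admissible_coeff g \<longleftrightarrow> (\<forall>c d. g c d \<noteq> 0 \<longrightarrow> 0 \<le> d) \<and> (\<forall>d. \<exists>A. \<forall>c. g c d \<noteq> 0 \<longrightarrow> A \<le> c)"

definition admissible_subst :: "(complex fls \<Rightarrow> cser2) \<Rightarrow> bool" where
  "admissible_subst \<sigma> \<longleftrightarrow> (\<forall>f. admissible_coeff (\<sigma> f)) \<and> \<sigma> 0 = (\<lambda>c d. 0)"

lemma fls_nth_nonzero_subdegree: "fls_nth f n \<noteq> 0 \<Longrightarrow> fls_subdegree f \<le> n"
  using fls_eq0_below_subdegree not_le by blast

lemma sub_plus_zero[simp]: "sub_plus s 0 = (\<lambda>c d. 0)"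
  by (simp add: sub_plus_def fun_eq_iff)

lemma admissible_sub_x: "admissible_subst sub_x"
  unfolding admissible_subst_def admissible_coeff_def sub_x_def
  by (auto intro!: exI[of _ "fls_subdegree f" for f] fls_nth_nonzero_subdegree simp: fun_eq_iff)

lemma admissible_sub_negx: "admissible_subst sub_negx"
  unfolding admissible_subst_def admissible_coeff_def sub_negx_def
  by (auto intro!: exI[of _ "fls_subdegree f" for f] fls_nth_nonzero_subdegree simp: fun_eq_iff)

lemma admissible_sub_plus: "admissible_subst (sub_plus s)"
  unfolding admissible_subst_def admissible_coeff_def sub_plus_def
proof (intro conjI allI impI)
  fix f d show "\<exists>A. \<forall>c. (if 0 \<le> d then s ^ nat d * (complex_of_int (c + d) gchoose nat d) * fls_nth f (c + d) else 0) \<noteq> 0 \<longrightarrow> A \<le> c"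
    by (rule exI[of _ "fls_subdegree f - d"]) (auto dest!: fls_nth_nonzero_subdegree split: if_splits)
qed (auto split: if_splits simp: fun_eq_iff)

definition coeff_op :: "('i \<Rightarrow> 'p \<Rightarrow> cser2) \<Rightarrow> ('i \<Rightarrow> 'p \<Rightarrow> 'j) \<Rightarrow> 'i \<Rightarrow> 'j ser2" where
  "coeff_op g h = (\<lambda>i c d. Sum_any (\<lambda>p. smul (g i p c d) (bv (h i p))))"

lemma coeff_op_nonzero_ex: "coeff_op g h i c d \<noteq> 0 \<Longrightarrow> \<exists>p. g i p c d \<noteq> 0"
proof -
  assume "coeff_op g h i c d \<noteq> 0"
  then obtain p where "smul (g i p c d) (bv (h i p)) \<noteq> 0" unfolding coeff_op_def using Sum_any_nonzero_ex by blast
  then show ?thesis by (auto simp: smul_eq_0_iff)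
qed

lemma keys_coeff_op: "Poly_Mapping.keys (coeff_op g h i c d) \<subseteq> h i ` {p. g i p c d \<noteq> 0}"
proof
  fix k assume k: "k \<in> Poly_Mapping.keys (coeff_op g h i c d)"
  let ?f = "\<lambda>p. smul (g i p c d) (bv (h i p))"
  have fin: "finite {p. ?f p \<noteq> 0}"
  proof (rule ccontr)
    assume "infinite {p. ?f p \<noteq> 0}"
    then have "coeff_op g h i c d = 0" unfolding coeff_op_def by simp
    with k show False by simp
  qed
  have "Sum_any (\<lambda>p. Poly_Mapping.lookup (?f p) k) \<noteq> 0"
    using k unfolding coeff_op_def lookup_Sum_any[OF fin, symmetric] by (simp add: in_keys_iff)
  then obtain p where "Poly_Mapping.lookup (?f p) k \<noteq> 0" using Sum_any_nonzero_ex by blast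
  then show "k \<in> h i ` {p. g i p c d \<noteq> 0}" by (auto simp: lookup_bv split: if_splits)
qed

lemma regular_coeff_op:
  assumes fin: "\<And>i. finite {p. \<exists>c d. g i p c d \<noteq> 0}" and ok: "\<And>i p. admissible_coeff (g i p)"
  shows "regular_op (coeff_op g h)"
proof -
  have dp: "0 \<le> d" if nz: "coeff_op g h i c d \<noteq> 0" for i c d
  proof -
    obtain p where "g i p c d \<noteq> 0" using coeff_op_nonzero_ex[OF nz] by blast
    then show "0 \<le> d" using ok[of i p] unfolding admissible_coeff_def by blast
  qed
  have fin_row: "finite (\<Union>a. Poly_Mapping.keys (coeff_op g h i a b))" for i b
  proof (rule finite_subset[OF _ finite_imageI[OF fin[of i], of "h i"]], safe)
    fix k a assume "k \<in> Poly_Mapping.keys (coeff_op g h i a b)"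
    then have "k \<in> h i ` {p. g i p a b \<noteq> 0}" by (rule subsetD[OF keys_coeff_op])
    then show "k \<in> h i ` {p. \<exists>c d. g i p c d \<noteq> 0}" by blast
  qed
  have fin_all: "finite (\<Union>a. \<Union>b. Poly_Mapping.keys (coeff_op g h i a b))" for i
  proof (rule finite_subset[OF _ finite_imageI[OF fin[of i], of "h i"]], safe)
    fix k a b assume "k \<in> Poly_Mapping.keys (coeff_op g h i a b)"
    then have "k \<in> h i ` {p. g i p a b \<noteq> 0}" by (rule subsetD[OF keys_coeff_op])
    then show "k \<in> h i ` {p. \<exists>c d. g i p c d \<noteq> 0}" by blast
  qed
  have row: "\<exists>m. \<forall>a. coeff_op g h i a b \<noteq> 0 \<longrightarrow> m \<le> a" for i b
  proof -
    have "\<forall>p. \<exists>A. \<forall>c. g i p c b \<noteq> 0 \<longrightarrow> A \<le> c"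
      using ok unfolding admissible_coeff_def by blast
    then obtain A where A: "\<And>p c. g i p c b \<noteq> 0 \<Longrightarrow> A p \<le> c"
      by (metis choice)
    obtain m where m: "\<forall>p\<in>{p. \<exists>c d. g i p c d \<noteq> 0}. m \<le> A p"
      using finite_lower_bound[OF fin[of i]] by blast
    have "m \<le> a" if nz: "coeff_op g h i a b \<noteq> 0" for a
    proof -
      obtain p where p: "g i p a b \<noteq> 0" using coeff_op_nonzero_ex[OF nz] by blast
      then have "m \<le> A p" using m by blast
      also have "A p \<le> a" using A[OF p] .
      finally show "m \<le> a" .
    qed
    then show ?thesis by blast
  qed
  show ?thesis
    unfolding regular_op_def laurent_op_def laurent_def laurent_supp_def fin_indexed_op_def
      fin_indexed_def finite_supp_def nonneg_op_def supp_of_def keys_empty_iff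
    using dp by (intro conjI allI impI row fin_row fin_all exI[of _ 0]) auto
qed

lemma sop_coeff_op: "sop M \<sigma> = coeff_op (\<lambda>i p. \<sigma> (Poly_Mapping.lookup (M i) p)) (\<lambda>i p. p)"
  unfolding sop_def coeff_op_def ..

lemma leg12_coeff_op: "leg12 M \<sigma> = coeff_op (\<lambda>(a, b, c) p. \<sigma> (Poly_Mapping.lookup (M (a, b)) p)) (\<lambda>(a, b, c) (m, n). (m, n, c))"
  unfolding leg12_def coeff_op_def by (auto simp: fun_eq_iff case_prod_beta intro!: Sum_any.cong)

lemma leg23_coeff_op: "leg23 M \<sigma> = coeff_op (\<lambda>(a, b, c) p. \<sigma> (Poly_Mapping.lookup (M (b, c)) p)) (\<lambda>(a, b, c) (n, t). (a, n, t))"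
  unfolding leg23_def coeff_op_def by (auto simp: fun_eq_iff case_prod_beta intro!: Sum_any.cong)

lemma leg13_coeff_op: "leg13 M \<sigma> = coeff_op (\<lambda>(a, b, c) p. \<sigma> (Poly_Mapping.lookup (M (a, c)) p)) (\<lambda>(a, b, c) (m, t). (m, b, t))"
  unfolding leg13_def coeff_op_def by (auto simp: fun_eq_iff case_prod_beta intro!: Sum_any.cong)

lemma vec_map_coeff_op: "inj h \<Longrightarrow> vec_map h (coeff_op g h' i c d) = coeff_op g (\<lambda>i p. h (h' i p)) i c d"
  unfolding coeff_op_def by (simp add: vec_map_Sum_any vec_map_smul vec_map_bv)

lemma finite_coeff_support:
  "admissible_subst \<sigma> \<Longrightarrow> finite {p. \<exists>c d. \<sigma> (Poly_Mapping.lookup v p) c d \<noteq> 0}"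
  unfolding admissible_subst_def
  by (rule finite_subset[of _ "Poly_Mapping.keys v"]) (auto simp: in_keys_iff)

lemma regular_sop: "admissible_subst \<sigma> \<Longrightarrow> regular_op (sop M \<sigma>)"
  unfolding sop_coeff_op
  by (rule regular_coeff_op) (auto simp: finite_coeff_support admissible_subst_def)

lemma regular_leg12: "admissible_subst \<sigma> \<Longrightarrow> regular_op (leg12 M \<sigma>)"
  unfolding leg12_coeff_op
  by (rule regular_coeff_op) (auto simp: finite_coeff_support admissible_subst_def split: prod.splits)

lemma regular_leg23: "admissible_subst \<sigma> \<Longrightarrow> regular_op (leg23 M \<sigma>)"
  unfolding leg23_coeff_op
  by (rule regular_coeff_op) (auto simp: finite_coeff_support admissible_subst_def split: prod.splits)

lemma regular_leg13: "admissible_subst \<sigma> \<Longrightarrow> regular_op (leg13 M \<sigma>)"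
  unfolding leg13_coeff_op
  by (rule regular_coeff_op) (auto simp: finite_coeff_support admissible_subst_def split: prod.splits)

lemmas regular_ops =
  regular_sop[OF admissible_sub_x] regular_sop[OF admissible_sub_negx] regular_sop[OF admissible_sub_plus]
  regular_leg12[OF admissible_sub_plus] regular_leg23[OF admissible_sub_plus] regular_leg13[OF admissible_sub_plus]
  regular_leg12[OF admissible_sub_x] regular_leg23[OF admissible_sub_x] regular_leg13[OF admissible_sub_x]
  regular_reindex_op regular_id_op regular_flip

lemmas op_props = regular_ops[unfolded regular_op_def] laurent_const2 fin_indexed_const2

definition truncated :: "'b vop \<Rightarrow> bool" where
  "truncated Y \<longleftrightarrow> (\<forall>u v. \<exists>N. \<forall>n\<ge>N. Y u v n = 0)"

lemma nonlocal_va_truncated: "nonlocal_va Y vac \<Longrightarrow> truncated Y"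
  unfolding nonlocal_va_def truncated_def by blast

lemma Y12_vec_map: "Y12 Y = (\<lambda>(a, b, c) cc dd. if cc = 0 then vec_map (\<lambda>k. (k, c)) (Y (bv a) (bv b) (- dd - 1)) else 0)"
  unfolding Y12_def by (auto simp: tens_bv_right fun_eq_iff)

lemma Y23_vec_map: "Y23 Y = (\<lambda>(a, b, c) cc dd. if cc = 0 then vec_map (\<lambda>k. (a, k)) (Y (bv b) (bv c) (- dd - 1)) else 0)"
  unfolding Y23_def by (auto simp: tens_bv_left fun_eq_iff)

lemma laurent_mode_series:
  assumes tr: "truncated Y" and inj: "inj h"
  shows "laurent (\<lambda>cc dd. if cc = 0 then vec_map h (Y u v (- dd - 1)) else 0)"
  unfolding laurent_def laurent_supp_def supp_of_def
proof (intro conjI allI)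
  obtain N where N: "\<forall>n\<ge>N. Y u v n = 0" using tr unfolding truncated_def by blast
  show "\<exists>B. \<forall>a b. Poly_Mapping.keys (if a = 0 then vec_map h (Y u v (- b - 1)) else 0) \<noteq> {} \<longrightarrow> B \<le> b"
  proof (rule exI[of _ "- N"], intro allI impI)
    fix a b assume "Poly_Mapping.keys (if a = 0 then vec_map h (Y u v (- b - 1)) else 0) \<noteq> {}"
    then have "Y u v (- b - 1) \<noteq> 0" by (auto simp: keys_empty_iff vec_map_eq_0_iff[OF inj] split: if_splits)
    then have "\<not> (- b - 1 \<ge> N)" using N by blast
    then show "- N \<le> b" by simp
  qed
  show "\<exists>A. \<forall>a. Poly_Mapping.keys (if a = 0 then vec_map h (Y u v (- b - 1)) else 0) \<noteq> {} \<longrightarrow> A \<le> (a::int)" for b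
    by (rule exI[of _ 0]) (auto split: if_splits)
  show "finite (\<Union>a. Poly_Mapping.keys (if a = (0::int) then vec_map h (Y u v (- b - 1)) else 0))" for b
  proof -
    have "(\<Union>a. Poly_Mapping.keys (if a = (0::int) then vec_map h (Y u v (- b - 1)) else 0)) \<subseteq> Poly_Mapping.keys (vec_map h (Y u v (- b - 1)))"
      by (auto split: if_splits)
    then show ?thesis by (rule finite_subset) simp
  qed
qed

lemma laurent_op_Y12: "truncated Y \<Longrightarrow> laurent_op (Y12 Y)"
  unfolding laurent_op_def Y12_vec_map by (auto intro!: laurent_mode_series simp: inj_def)

lemma laurent_op_Y23: "truncated Y \<Longrightarrow> laurent_op (Y23 Y)"
  unfolding laurent_op_def Y23_vec_map by (auto intro!: laurent_mode_series simp: inj_def)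

lemma flip_op_comp_Y23: "op_comp flip (Y23 Y) = op_comp (Y12 Y) (reindex_op (\<lambda>(a, b, c). (b, c, a)))"
  unfolding op_comp_reindex_op
  by (auto simp: op_comp_def app_flip Y23_vec_map Y12_vec_map fun_eq_iff vec_map_vec_map inj_swap inj_def prod.swap_def)

lemma flip_op_comp_Y12: "op_comp flip (Y12 Y) = op_comp (Y23 Y) (reindex_op (\<lambda>(a, b, c). (c, a, b)))"
  unfolding op_comp_reindex_op
  by (auto simp: op_comp_def app_flip Y23_vec_map Y12_vec_map fun_eq_iff vec_map_vec_map inj_swap inj_def prod.swap_def)

lemma sop_comp_flip: "sop (comp_flip S) \<sigma> = op_comp (sop S \<sigma>) flip"
  unfolding flip_reindex_op op_comp_reindex_op sop_def comp_flip_def prod.swap_def by (auto simp: fun_eq_iff)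

lemma leg12_comp_flip: "leg12 (comp_flip S) \<sigma> = op_comp (leg12 S \<sigma>) (reindex_op (\<lambda>(a, b, c). (b, a, c)))"
  unfolding op_comp_reindex_op leg12_def comp_flip_def by (auto simp: fun_eq_iff)

lemma leg23_comp_flip: "leg23 (comp_flip S) \<sigma> = op_comp (leg23 S \<sigma>) (reindex_op (\<lambda>(a, b, c). (a, c, b)))"
  unfolding op_comp_reindex_op leg23_def comp_flip_def by (auto simp: fun_eq_iff)

lemma sop_sub_negx: "sop S sub_negx i c d = smul ((-1) ^ nat \<bar>c\<bar>) (sop S sub_x i c d)"
  unfolding sop_def smul_Sum_any by (rule Sum_any.cong) (simp add: smul_smul sub_negx_def sub_x_def)

lemma app_sop_sub_negx_const2: "app (sop S sub_negx) (const2 t) = negvar (app (sop S sub_x) (const2 t))"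
  unfolding negvar_def by (auto simp: fun_eq_iff app_const2_Sum_any sop_sub_negx smul_Sum_any smul_smul mult.commute)

lemma negvar_const2: "negvar (const2 t) = const2 t"
  unfolding negvar_def const2_def by (auto simp: fun_eq_iff)

lemma app_op_comp_const2:
  assumes "laurent_op E'" "laurent_op E" "nonneg_op E \<or> fin_indexed_op E'"
  shows "app (op_comp E E') (const2 t) = app E (app E' (const2 t))"
  by (rule app_assoc_laurent[symmetric]) (use assms laurent_const2 fin_indexed_const2 in auto)

lemma app_sop_comp_flip_const2:
  assumes "admissible_subst \<sigma>"
  shows "app (sop (comp_flip S) \<sigma>) (const2 t) = app (sop S \<sigma>) (const2 (vec_map prod.swap t))"
  unfolding sop_comp_flip
  by (subst app_op_comp_const2) (use regular_sop[OF assms] regular_reindex_op in \<open>auto simp: regular_op_def flip_reindex_op app_reindex_op_const2\<close>)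

lemma comp_flip_vacuum_right:
  assumes vacS: "\<forall>v. app (sop S sub_x) (const2 (tens vac v)) = const2 (tens vac v)"
  shows "app (sop (comp_flip S) sub_x) (const2 (tens v vac)) = const2 (tens vac v)"
  using vacS by (simp add: app_sop_comp_flip_const2[OF admissible_sub_x] vec_map_swap_tens)

text \<open>Unitarity with the vacuum property of S gives S(x)(v \<otimes> 1) = v \<otimes> 1, since
 S(-x)(1 \<otimes> v) = 1 \<otimes> v.\<close>

lemma comp_flip_vacuum_left:
  assumes vacS: "\<forall>v. app (sop S sub_x) (const2 (tens vac v)) = const2 (tens vac v)"
    and un: "unitary S"
  shows "app (sop (comp_flip S) sub_x) (const2 (tens vac u)) = const2 (tens u vac)"
proof -
  have "app (sop S sub_negx) (const2 (tens vac u)) = const2 (tens vac u)"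
    unfolding app_sop_sub_negx_const2 using vacS negvar_const2 by simp
  then show ?thesis
    using un[unfolded unitary_def, rule_format, of "tens u vac"]
    by (simp add: app_sop_comp_flip_const2[OF admissible_sub_x] app_flip_const2 vec_map_swap_tens)
qed

section \<open>The identity for R(x1)(1 \<otimes> Y(x2))\<close>

lemma reindex_leg12_reindex:
  "op_comp (reindex_op (\<lambda>(a, b, c). (a, c, b))) (op_comp (leg12 M \<sigma>) (reindex_op (\<lambda>(a, b, c). (b, a, c)))) =
   op_comp (leg13 M \<sigma>) (reindex_op (\<lambda>(a, b, c). (b, c, a)))"
  unfolding op_comp_reindex_op
  by (simp add: op_comp_def app_reindex_op leg12_coeff_op leg13_coeff_op vec_map_coeff_op inj_def fun_eq_iff split: prod.splits)
     (simp add: coeff_op_def case_prod_beta)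

text \<open>Conjugating by the flip turns 1 \<otimes> Y into Y \<otimes> 1 up to a cyclic permutation of the factors,
 so the hexagon identity for S applies; the same permutation turns S^13 into (S \<sigma>)^12.\<close>

lemma comp_flip_Y23:
  assumes tr: "truncated Y"
    and hex: "\<forall>t. app (sop S sub_x) (app (Y12 Y) (const2 t)) =
       app (Y12 Y) (app (leg23 S sub_x) (app (leg13 S (sub_plus 1)) (const2 t)))"
  shows "app (sop (comp_flip S) sub_x) (app (Y23 Y) (const2 t)) =
     app (Y12 Y) (app (leg23 (comp_flip S) sub_x) (app (leg12 (comp_flip S) (sub_plus 1)) (const2 t)))"
proof -
  let ?Sx = "sop S sub_x" and ?L23 = "leg23 S sub_x" and ?L13 = "leg13 S (sub_plus 1)"
    and ?L12 = "leg12 S (sub_plus 1)" and ?c = "const2 t"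
  let ?Q = "\<lambda>(a::'a, b::'a, c::'a). (b, c, a)" and ?P12 = "\<lambda>(a::'a, b::'a, c::'a). (b, a, c)"
    and ?P23 = "\<lambda>(a::'a, b::'a, c::'a). (a, c, b)"
  have gY12: "laurent_op (Y12 Y)" and gY23: "laurent_op (Y23 Y)"
    using tr by (rule laurent_op_Y12, rule laurent_op_Y23)
  have "laurent (app (Y23 Y) ?c)" by (rule laurent_app) (use gY23 in \<open>auto simp: op_props\<close>)
  then have "app (op_comp ?Sx flip) (app (Y23 Y) ?c) = app ?Sx (app flip (app (Y23 Y) ?c))"
    by (intro app_assoc_laurent[symmetric]) (auto simp: op_props)
  also have "app flip (app (Y23 Y) ?c) = app (op_comp flip (Y23 Y)) ?c"
    by (rule app_assoc_laurent) (use gY23 in \<open>auto simp: op_props\<close>)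
  also have "\<dots> = app (Y12 Y) (const2 (vec_map ?Q t))"
    unfolding flip_op_comp_Y23
    by (subst app_op_comp_const2) (use gY12 in \<open>auto simp: app_reindex_op_const2 op_props\<close>)
  also have "app ?Sx \<dots> = app (Y12 Y) (app ?L23 (app ?L13 (const2 (vec_map ?Q t))))"
    using hex by simp
  also have "app ?L13 (const2 (vec_map ?Q t)) = app (op_comp ?L13 (reindex_op ?Q)) ?c"
    by (subst app_op_comp_const2) (auto simp: app_reindex_op_const2 op_props)
  also have "app ?L23 \<dots> = app (op_comp ?L23 (op_comp ?L13 (reindex_op ?Q))) ?c"
    by (subst app_op_comp_const2) (auto intro!: laurent_op_comp simp: op_props)
  also have "op_comp ?L23 (op_comp ?L13 (reindex_op ?Q)) =
      op_comp (op_comp ?L23 (reindex_op ?P23)) (op_comp ?L12 (reindex_op ?P12))"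
    unfolding reindex_leg12_reindex[symmetric]
    by (rule op_comp_assoc) (auto intro!: laurent_op_comp fin_indexed_op_comp simp: op_props)
  also have "app \<dots> ?c = app (op_comp ?L23 (reindex_op ?P23)) (app (op_comp ?L12 (reindex_op ?P12)) ?c)"
    by (rule app_assoc_laurent[symmetric]) (auto intro!: laurent_op_comp nonneg_op_comp simp: op_props)
  finally show ?thesis
    unfolding sop_comp_flip leg12_comp_flip leg23_comp_flip .
qed

lemma minus_one_power_int: "((-1::complex) powi n) = (-1) ^ nat \<bar>n\<bar>"
proof (cases "n \<ge> 0")
  case True then show ?thesis by (simp add: power_int_def)
next
  case False
  then have "n = - int (nat (-n))" by simp
  then have "(-1::complex) powi n = (-1) powi (- int (nat (-n)))" by simp
  also have "\<dots> = (-1) powi (int (nat (-n)))" by (rule power_int_minus_one_minus)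
  also have "\<dots> = (-1) ^ nat (-n)" by (simp add: power_int_def)
  finally show ?thesis using False by simp
qed

lemma minus_one_power_abs_add: "((-1::complex) ^ nat \<bar>x + y\<bar>) = (-1) ^ nat \<bar>x\<bar> * (-1) ^ nat \<bar>y\<bar>"
  unfolding minus_one_power_int[symmetric] by (simp add: power_int_add)

definition fls_negx :: "complex fls \<Rightarrow> complex fls" where
  "fls_negx F = fls_compose_fps F (fps_const (-1) * fps_X)"

lemma fls_nth_negx: "fls_nth (fls_negx F) n = (-1) ^ nat \<bar>n\<bar> * fls_nth F n"
  unfolding fls_negx_def by (simp add: fls_nth_fls_compose_fps_linear minus_one_power_int)

lemma fls_negx_mult: "fls_negx (F * G) = fls_negx F * fls_negx G"
  unfolding fls_negx_def by (rule fls_compose_fps_mult) (auto simp: fps_eq_iff)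

lemma fls_negx_add: "fls_negx (F + G) = fls_negx F + fls_negx G"
  unfolding fls_negx_def by (rule fls_compose_fps_add) (auto simp: fps_eq_iff)

lemma fls_negx_0[simp]: "fls_negx 0 = 0" and fls_negx_1[simp]: "fls_negx 1 = 1"
  unfolding fls_negx_def by simp_all

lemma fls_negx_negx[simp]: "fls_negx (fls_negx F) = F"
  by (rule fls_eqI) (simp add: fls_nth_negx power_mult_distrib[symmetric])

lemma fls_negx_sum: "fls_negx (sum f A) = sum (\<lambda>x. fls_negx (f x)) A"
  by (induction A rule: infinite_finite_induct) (auto simp: fls_negx_add)

lemma sub_x_eq_sub_plus_0: "sub_x = sub_plus 0"
  unfolding sub_x_def sub_plus_def by (auto simp: fun_eq_iff)

lemma sub_negx_sub_plus: "sub_negx f = sub_plus 0 (fls_negx f)"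
  unfolding sub_negx_def sub_plus_def by (auto simp: fun_eq_iff fls_nth_negx)

lemma int_interval_image: "0 \<le> b \<Longrightarrow> {0..b} = int ` {0..nat b}"
proof (rule set_eqI, rule iffI)
  fix x assume "0 \<le> b" "x \<in> {0..b}"
  then show "x \<in> int ` {0..nat b}" by (intro image_eqI[of _ _ "nat x"]) auto
qed auto

lemma sub_plus_nonzero: "sub_plus s f c d \<noteq> 0 \<Longrightarrow> 0 \<le> d \<and> fls_subdegree f \<le> c + d"
  unfolding sub_plus_def by (auto split: if_splits dest!: fls_nth_nonzero_subdegree)

lemma sum_sub_plus_antidiagonal:
  assumes "0 \<le> b"
  shows "(\<Sum>d\<in>{0..b}. sub_plus s f (a - (e - d)) (b - d) * sub_plus s g (e - d) d) =
    s ^ nat b * ((of_int (a + b) :: complex) gchoose nat b) * (fls_nth f (a + b - e) * fls_nth g e)"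
proof -
  let ?B = "\<lambda>k. ((of_int (a + b - e) :: complex) gchoose (nat b - k)) * (of_int e gchoose k)"
  have "(\<Sum>d\<in>{0..b}. sub_plus s f (a - (e - d)) (b - d) * sub_plus s g (e - d) d) =
      (\<Sum>k\<in>{0..nat b}. sub_plus s f (a - (e - int k)) (b - int k) * sub_plus s g (e - int k) (int k))"
    unfolding int_interval_image[OF assms] by (simp add: sum.reindex)
  also have "\<dots> = (\<Sum>k\<in>{0..nat b}. s ^ nat b * ?B k * (fls_nth f (a + b - e) * fls_nth g e))"
  proof (rule sum.cong[OF refl])
    fix k assume k: "k \<in> {0..nat b}"
    then have "nat (b - int k) = nat b - k" "a - (e - int k) + (b - int k) = a + b - e"
      and "s ^ (nat b - k) * s ^ k = s ^ nat b" by (auto simp: power_add[symmetric])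
    with k assms show "sub_plus s f (a - (e - int k)) (b - int k) * sub_plus s g (e - int k) (int k) =
        s ^ nat b * ?B k * (fls_nth f (a + b - e) * fls_nth g e)"
      unfolding sub_plus_def by (simp add: algebra_simps)
  qed
  also have "\<dots> = s ^ nat b * (\<Sum>k\<in>{0..nat b}. ?B k) * (fls_nth f (a + b - e) * fls_nth g e)"
    by (simp add: sum_distrib_left sum_distrib_right)
  also have "(\<Sum>k\<in>{0..nat b}. ?B k) = (of_int e + of_int (a + b - e)) gchoose nat b"
    using gbinomial_Vandermonde[of "of_int e" "of_int (a + b - e)" "nat b"] by (simp add: mult.commute)
  finally show ?thesis by simp
qed

text \<open>Substitution f \<mapsto> f(y1 + s y2) is multiplicative; after the change of variables
 e = c + d the inner sums are Vandermonde's identity.\<close>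

lemma sub_plus_mult:
  "Sum_any (\<lambda>(c, d). sub_plus s f (a - c) (b - d) * sub_plus s g c d) = sub_plus s (f * g) a b"
proof (cases "0 \<le> b")
  case False
  have "sub_plus s f (a - c) (b - d) * sub_plus s g c d = 0" for c d
    using False sub_plus_nonzero[of s f "a - c" "b - d"] sub_plus_nonzero[of s g c d] by force
  then have "(\<lambda>(c, d). sub_plus s f (a - c) (b - d) * sub_plus s g c d) = (\<lambda>_. 0)"
    by (intro ext) clarify
  then show ?thesis using False by (simp add: sub_plus_def[of s "f * g"])
next
  case True
  define lo where "lo = fls_subdegree g"
  define hi where "hi = a + b - fls_subdegree f"
  define W where "W = (\<lambda>e d. sub_plus s f (a - (e - d)) (b - d) * sub_plus s g (e - d) d)"
  have "Sum_any (\<lambda>(c, d). sub_plus s f (a - c) (b - d) * sub_plus s g c d) = Sum_any (\<lambda>(e, d). W e d)"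
  proof (rule Sum_any.reindex_cong[symmetric])
    show "bij (\<lambda>(c::int, d::int). (c + d, d))"
      by (rule o_bij[where g = "\<lambda>(e, d). (e - d, d)"]) (auto simp: fun_eq_iff)
  qed (auto simp: W_def fun_eq_iff)
  also have "\<dots> = (\<Sum>(e, d)\<in>{lo..hi} \<times> {0..b}. W e d)"
  proof (rule Sum_any.expand_superset)
    show "{p. (\<lambda>(e, d). W e d) p \<noteq> 0} \<subseteq> {lo..hi} \<times> {0..b}"
      using sub_plus_nonzero unfolding W_def lo_def hi_def by fastforce
  qed simp
  also have "\<dots> = (\<Sum>e\<in>{lo..hi}. s ^ nat b * ((of_int (a + b) :: complex) gchoose nat b) * (fls_nth f (a + b - e) * fls_nth g e))"
    unfolding sum.cartesian_product[symmetric] W_def sum_sub_plus_antidiagonal[OF True] ..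
  also have "\<dots> = s ^ nat b * ((of_int (a + b) :: complex) gchoose nat b) * fls_nth (f * g) (a + b)"
    unfolding sum_distrib_left[symmetric] lo_def hi_def mult.commute[of f g] fls_times_nth(2)[of g f]
    by (simp add: mult.commute)
  finally show ?thesis using True by (simp add: sub_plus_def)
qed
section \<open>Matrices over C((x)) and substituted operators\<close>

type_synonym 'i fls_vec = "'i \<Rightarrow>\<^sub>0 complex fls"

lemma lookup_map_mult: "Poly_Mapping.lookup (Poly_Mapping.map (\<lambda>f. (c::complex fls) * f) v) q = c * Poly_Mapping.lookup v q"
  by (simp add: Poly_Mapping.map.rep_eq when_def)

lemma map_zero_fun[simp]: "Poly_Mapping.map (\<lambda>f. 0) v = 0"
  by (rule poly_mapping_eqI) (simp add: Poly_Mapping.map.rep_eq when_def)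

lemma lookup_ext_lin:
  "Poly_Mapping.lookup (ext_lin M T) q = Sum_any (\<lambda>i. Poly_Mapping.lookup T i * Poly_Mapping.lookup (M i) q)"
proof -
  have fin: "finite {i. Poly_Mapping.map (\<lambda>f. Poly_Mapping.lookup T i * f) (M i) \<noteq> 0}"
    by (rule finite_subset[of _ "Poly_Mapping.keys T"]) (auto simp: in_keys_iff)
  show ?thesis unfolding ext_lin_def lookup_Sum_any[OF fin] lookup_map_mult ..
qed

lemma ext_lin_single: "ext_lin M (Poly_Mapping.single i 1) = M i"
proof (rule poly_mapping_eqI)
  fix q
  have "Sum_any (\<lambda>j. Poly_Mapping.lookup (Poly_Mapping.single i 1) j * Poly_Mapping.lookup (M j) q) =
     Sum_any (\<lambda>j. if j = i then Poly_Mapping.lookup (M j) q else 0)"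
    by (rule Sum_any.cong) (simp add: lookup_single when_def)
  then show "Poly_Mapping.lookup (ext_lin M (Poly_Mapping.single i 1)) q = Poly_Mapping.lookup (M i) q"
    by (simp add: lookup_ext_lin)
qed

lemma ext_lin_basis: "ext_lin (\<lambda>i. Poly_Mapping.single i 1) T = T"
proof (rule poly_mapping_eqI)
  fix q
  have "Sum_any (\<lambda>j. Poly_Mapping.lookup T j * Poly_Mapping.lookup (Poly_Mapping.single j 1) q) =
     Sum_any (\<lambda>j. if j = q then Poly_Mapping.lookup T j else 0)"
    by (rule Sum_any.cong) (simp add: lookup_single when_def)
  then show "Poly_Mapping.lookup (ext_lin (\<lambda>i. Poly_Mapping.single i 1) T) q = Poly_Mapping.lookup T q"
    by (simp add: lookup_ext_lin)
qed

lemma ext_lin_ext_lin: "ext_lin M (ext_lin N T) = ext_lin (\<lambda>i. ext_lin M (N i)) T"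
proof (rule poly_mapping_eqI)
  fix q
  let ?g = "\<lambda>k i. Poly_Mapping.lookup T i * Poly_Mapping.lookup (N i) k * Poly_Mapping.lookup (M k) q"
  have lhs: "Poly_Mapping.lookup (ext_lin M (ext_lin N T)) q = Sum_any (\<lambda>k. Sum_any (\<lambda>i. ?g k i))"
    unfolding lookup_ext_lin by (simp add: Sum_any_left_distrib_idom)
  have rhs: "Poly_Mapping.lookup (ext_lin (\<lambda>i. ext_lin M (N i)) T) q = Sum_any (\<lambda>i. Sum_any (\<lambda>k. ?g k i))"
    unfolding lookup_ext_lin by (simp add: Sum_any_right_distrib_idom mult.assoc)
  let ?C = "(\<Union>i\<in>Poly_Mapping.keys T. Poly_Mapping.keys (N i)) \<times> Poly_Mapping.keys T"
  have "Sum_any (\<lambda>k. Sum_any (\<lambda>i. ?g k i)) = Sum_any (\<lambda>i. Sum_any (\<lambda>k. ?g k i))"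
  proof (rule Sum_any.swap[of ?C])
    show "finite ?C" by simp
    show "{k. \<exists>i. ?g k i \<noteq> 0} \<times> {i. \<exists>k. ?g k i \<noteq> 0} \<subseteq> ?C"
    proof (rule subsetI)
      fix x assume "x \<in> {k. \<exists>i. ?g k i \<noteq> 0} \<times> {i. \<exists>k. ?g k i \<noteq> 0}"
      then obtain k i i' k' where x: "x = (k, i')" and h1: "?g k i \<noteq> 0" and h2: "?g k' i' \<noteq> 0"
        by (cases x) auto
      from h1 have "i \<in> Poly_Mapping.keys T" "k \<in> Poly_Mapping.keys (N i)" by (auto simp: in_keys_iff)
      moreover from h2 have "i' \<in> Poly_Mapping.keys T" by (auto simp: in_keys_iff)
      ultimately show "x \<in> ?C" unfolding x by blast
    qed
  qed
  then show "Poly_Mapping.lookup (ext_lin M (ext_lin N T)) q = Poly_Mapping.lookup (ext_lin (\<lambda>i. ext_lin M (N i)) T) q"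
    unfolding lhs rhs .
qed

definition mat_comp :: "('j \<Rightarrow> 'k fls_vec) \<Rightarrow> ('i \<Rightarrow> 'j fls_vec) \<Rightarrow> 'i \<Rightarrow> 'k fls_vec" where
  "mat_comp M N = (\<lambda>i. ext_lin M (N i))"

lemma mat_comp_assoc: "mat_comp M (mat_comp N P) = mat_comp (mat_comp M N) P"
  unfolding mat_comp_def by (simp add: ext_lin_ext_lin)

definition mat_id :: "'i \<Rightarrow> 'i fls_vec" where "mat_id = (\<lambda>i. Poly_Mapping.single i 1)"

lemma mat_comp_id[simp]: "mat_comp M mat_id = M" "mat_comp mat_id M = M"
  unfolding mat_comp_def mat_id_def by (simp_all add: ext_lin_single ext_lin_basis fun_eq_iff)

lemma ext_lin_mat_comp: "ext_lin (mat_comp M N) T = ext_lin M (ext_lin N T)"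
  unfolding mat_comp_def by (simp add: ext_lin_ext_lin)

lemma ext_lin_mat_id[simp]: "ext_lin mat_id T = T"
  unfolding mat_id_def by (rule ext_lin_basis)

definition vec_negx :: "'i fls_vec \<Rightarrow> 'i fls_vec" where "vec_negx v = Poly_Mapping.map fls_negx v"

lemma lookup_vec_negx: "Poly_Mapping.lookup (vec_negx v) q = fls_negx (Poly_Mapping.lookup v q)"
  unfolding vec_negx_def by (simp add: Poly_Mapping.map.rep_eq when_def)

definition mat_negx :: "('i \<Rightarrow> 'j fls_vec) \<Rightarrow> 'i \<Rightarrow> 'j fls_vec" where "mat_negx M = (\<lambda>i. vec_negx (M i))"

lemma fls_negx_Sum_any: "finite {x. f x \<noteq> 0} \<Longrightarrow> fls_negx (Sum_any f) = Sum_any (\<lambda>x. fls_negx (f x))"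
proof -
  assume fin: "finite {x. f x \<noteq> 0}"
  have fin2: "{x. fls_negx (f x) \<noteq> 0} \<subseteq> {x. f x \<noteq> 0}" by auto
  have "fls_negx (Sum_any f) = fls_negx (sum f {x. f x \<noteq> 0})" by (simp add: Sum_any.expand_set)
  also have "\<dots> = sum (\<lambda>x. fls_negx (f x)) {x. f x \<noteq> 0}" by (rule fls_negx_sum)
  also have "\<dots> = Sum_any (\<lambda>x. fls_negx (f x))"
    by (rule Sum_any.expand_superset[symmetric]) (use fin fin2 in auto)
  finally show ?thesis .
qed

lemma vec_negx_ext_lin: "vec_negx (ext_lin M T) = ext_lin (mat_negx M) (vec_negx T)"
proof (rule poly_mapping_eqI)
  fix q
  have fin: "finite {i. Poly_Mapping.lookup T i * Poly_Mapping.lookup (M i) q \<noteq> 0}"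
    by (rule finite_subset[of _ "Poly_Mapping.keys T"]) (auto simp: in_keys_iff)
  show "Poly_Mapping.lookup (vec_negx (ext_lin M T)) q = Poly_Mapping.lookup (ext_lin (mat_negx M) (vec_negx T)) q"
    unfolding lookup_vec_negx lookup_ext_lin fls_negx_Sum_any[OF fin] mat_negx_def by (simp add: fls_negx_mult lookup_vec_negx)
qed

lemma vec_negx_single: "vec_negx (Poly_Mapping.single i 1) = Poly_Mapping.single i 1"
  by (rule poly_mapping_eqI) (simp add: lookup_vec_negx lookup_single when_def)

lemma mat_negx_mat_comp: "mat_negx (mat_comp M N) = mat_comp (mat_negx M) (mat_negx N)"
  unfolding mat_comp_def by (simp add: vec_negx_ext_lin fun_eq_iff mat_negx_def)

lemma mat_negx_id[simp]: "mat_negx mat_id = mat_id" unfolding mat_negx_def mat_id_def by (simp add: vec_negx_single)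

lemma vec_negx_negx[simp]: "vec_negx (vec_negx v) = v"
  by (rule poly_mapping_eqI) (simp add: lookup_vec_negx)

lemma mat_negx_negx[simp]: "mat_negx (mat_negx M) = M"
  unfolding mat_negx_def by simp

definition subst_vec :: "complex \<Rightarrow> 'i fls_vec \<Rightarrow> 'i ser2" where
  "subst_vec s T = (\<lambda>a b. Sum_any (\<lambda>i. smul (sub_plus s (Poly_Mapping.lookup T i) a b) (bv i)))"

lemma subst_vec_sop: "subst_vec s T = sop (\<lambda>_::unit. T) (sub_plus s) ()"
  unfolding subst_vec_def sop_def ..

lemma sop_sub_plus_subst_vec: "sop M (sub_plus s) = (\<lambda>i. subst_vec s (M i))"
  unfolding subst_vec_def sop_def ..

lemma lookup_subst_vec: "Poly_Mapping.lookup (subst_vec s T a b) q = sub_plus s (Poly_Mapping.lookup T q) a b"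
proof -
  have fin: "finite {i. smul (sub_plus s (Poly_Mapping.lookup T i) a b) (bv i) \<noteq> 0}"
    by (rule finite_subset[of _ "Poly_Mapping.keys T"]) (auto simp: in_keys_iff)
  have "Sum_any (\<lambda>i. sub_plus s (Poly_Mapping.lookup T i) a b * Poly_Mapping.lookup (bv i) q) =
      Sum_any (\<lambda>i. if i = q then sub_plus s (Poly_Mapping.lookup T i) a b else 0)"
    by (rule Sum_any.cong) (simp add: lookup_bv)
  then show ?thesis unfolding subst_vec_def lookup_Sum_any[OF fin] by simp
qed

lemma laurent_subst_vec: "laurent (subst_vec s T)"
  unfolding subst_vec_sop using regular_sop[OF admissible_sub_plus, of "\<lambda>_::unit. T" s]
  by (simp add: regular_op_def laurent_op_def)

lemma sub_plus_0_right: "sub_plus s f a 0 = fls_nth f a"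
  unfolding sub_plus_def by simp

lemma subst_vec_inj: "subst_vec s T = subst_vec s T' \<Longrightarrow> T = T'"
proof (rule poly_mapping_eqI)
  fix q assume "subst_vec s T = subst_vec s T'"
  then have "Poly_Mapping.lookup (subst_vec s T a 0) q = Poly_Mapping.lookup (subst_vec s T' a 0) q" for a by simp
  then have "fls_nth (Poly_Mapping.lookup T q) a = fls_nth (Poly_Mapping.lookup T' q) a" for a
    by (simp add: lookup_subst_vec sub_plus_0_right)
  then show "Poly_Mapping.lookup T q = Poly_Mapping.lookup T' q" by (rule fls_eqI)
qed

lemma sub_plus_1: "sub_plus s 1 a b = (if a = 0 \<and> b = 0 then 1 else 0)"
proof (cases "0 \<le> b \<and> a + b = 0")
  case True
  then have "(of_int (a + b) :: complex) = 0" by simp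
  then have "sub_plus s 1 a b = s ^ nat b * (0 gchoose nat b)"
    using True unfolding sub_plus_def by (simp add: fls_one_nth)
  also have "\<dots> = (if a = 0 \<and> b = 0 then 1 else 0)"
    using True by (auto simp: gbinomial_0_left)
  finally show ?thesis .
next
  case False
  then show ?thesis unfolding sub_plus_def by (auto simp: fls_one_nth)
qed

lemma subst_vec_single: "subst_vec s (Poly_Mapping.single i 1) = const2 (bv i)"
proof (intro ext poly_mapping_eqI)
  fix a b q
  show "Poly_Mapping.lookup (subst_vec s (Poly_Mapping.single i 1) a b) q = Poly_Mapping.lookup (const2 (bv i) a b) q"
    by (simp add: lookup_subst_vec lookup_single when_def sub_plus_1 const2_def lookup_bv)
qed

lemma fls_nth_Sum_any: "finite {x. f x \<noteq> 0} \<Longrightarrow> fls_nth (Sum_any f) n = Sum_any (\<lambda>x. fls_nth (f x) n)"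
proof -
  assume fin: "finite {x. f x \<noteq> 0}"
  have "fls_nth (Sum_any f) n = sum (\<lambda>x. fls_nth (f x) n) {x. f x \<noteq> 0}"
    by (simp add: Sum_any.expand_set fls_nth_sum)
  also have "\<dots> = Sum_any (\<lambda>x. fls_nth (f x) n)"
    by (rule Sum_any.expand_superset[symmetric]) (use fin in auto)
  finally show ?thesis .
qed

lemma sub_plus_Sum_any: "finite {x. f x \<noteq> 0} \<Longrightarrow> sub_plus s (Sum_any f) a b = Sum_any (\<lambda>x. sub_plus s (f x) a b)"
  unfolding sub_plus_def by (simp add: fls_nth_Sum_any Sum_any_right_distrib_idom)

lemma app_sop_subst_vec: "app (sop M (sub_plus s)) (subst_vec s T) = subst_vec s (ext_lin M T)"
proof (intro ext poly_mapping_eqI)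
  fix a b q
  have fa: "app_finite (sop M (sub_plus s)) (subst_vec s T)"
    by (rule app_finite_laurent) (auto simp: laurent_subst_vec op_props)
  define X where "X = (\<lambda>i c d. sub_plus s (Poly_Mapping.lookup T i) (a - c) (b - d) * sub_plus s (Poly_Mapping.lookup (M i) q) c d)"
  have L1: "Poly_Mapping.lookup (app (sop M (sub_plus s)) (subst_vec s T) a b) q = Sum_any (\<lambda>(i, c, d). X i c d)"
    by (simp only: lookup_app[OF fa]) (simp add: X_def sop_sub_plus_subst_vec lookup_subst_vec)
  have finX: "finite {p. (\<lambda>i cd. case cd of (c, d) \<Rightarrow> X i c d) (fst p) (snd p) \<noteq> 0}"
  proof (rule finite_subset)
    show "finite {(i, c, d). Poly_Mapping.lookup (subst_vec s T (a - c) (b - d)) i \<noteq> 0 \<and> sop M (sub_plus s) i c d \<noteq> 0}"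
      using fa unfolding app_finite_def by blast
    show "{p. (\<lambda>i cd. case cd of (c, d) \<Rightarrow> X i c d) (fst p) (snd p) \<noteq> 0} \<subseteq>
       {(i, c, d). Poly_Mapping.lookup (subst_vec s T (a - c) (b - d)) i \<noteq> 0 \<and> sop M (sub_plus s) i c d \<noteq> 0}"
      by (clarsimp simp: X_def sop_sub_plus_subst_vec lookup_subst_vec) (metis lookup_subst_vec lookup_zero)
  qed
  have L2: "Sum_any (\<lambda>(i, c, d). X i c d) = Sum_any (\<lambda>i. Sum_any (\<lambda>(c, d). X i c d))"
    using Sum_any_pair[OF finX] by (simp add: case_prod_beta)
  have L3: "Sum_any (\<lambda>(c, d). X i c d) = sub_plus s (Poly_Mapping.lookup T i * Poly_Mapping.lookup (M i) q) a b" for i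
    unfolding X_def by (rule sub_plus_mult)
  have finR: "finite {i. Poly_Mapping.lookup T i * Poly_Mapping.lookup (M i) q \<noteq> 0}"
    by (rule finite_subset[of _ "Poly_Mapping.keys T"]) (auto simp: in_keys_iff)
  have R: "Poly_Mapping.lookup (subst_vec s (ext_lin M T) a b) q = Sum_any (\<lambda>i. sub_plus s (Poly_Mapping.lookup T i * Poly_Mapping.lookup (M i) q) a b)"
    unfolding lookup_subst_vec lookup_ext_lin sub_plus_Sum_any[OF finR] ..
  show "Poly_Mapping.lookup (app (sop M (sub_plus s)) (subst_vec s T) a b) q = Poly_Mapping.lookup (subst_vec s (ext_lin M T) a b) q"
    unfolding L1 L2 L3 R ..
qed

definition flip_mat :: "'b \<times> 'b \<Rightarrow> ('b \<times> 'b) fls_vec" where "flip_mat k = Poly_Mapping.single (prod.swap k) 1"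

lemma sop_mat_id: "sop mat_id (sub_plus s) = id_op"
  unfolding sop_sub_plus_subst_vec mat_id_def id_op_def by (simp add: subst_vec_single)

lemma flip_sop_flip_mat: "flip = sop flip_mat (sub_plus s)"
  unfolding sop_sub_plus_subst_vec flip_mat_def flip_reindex_op reindex_op_def by (simp add: subst_vec_single)

lemma sop_sub_negx_mat_negx: "sop S sub_negx = sop (mat_negx S) (sub_plus 0)"
  unfolding sop_def mat_negx_def by (simp add: sub_negx_sub_plus lookup_vec_negx)

lemma op_comp_sop: "op_comp (sop M (sub_plus s)) (sop N (sub_plus s)) = sop (mat_comp M N) (sub_plus s)"
  by (simp only: op_comp_def sop_sub_plus_subst_vec[of N s]) (simp add: app_sop_subst_vec, simp add: sop_sub_plus_subst_vec mat_comp_def)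

lemma mat_negx_flip_mat: "mat_negx flip_mat = flip_mat" unfolding mat_negx_def flip_mat_def by (simp add: vec_negx_single)

lemma mat_comp_flip_mat: "mat_comp S flip_mat = comp_flip S"
  unfolding mat_comp_def flip_mat_def comp_flip_def prod.swap_def by (auto simp: ext_lin_single fun_eq_iff)

lemma unitary_mat_inverse:
  assumes un: "unitary S"
  shows "mat_comp S (mat_comp flip_mat (mat_comp (mat_negx S) flip_mat)) = mat_id"
    and "mat_comp (mat_negx S) (mat_comp flip_mat (mat_comp S flip_mat)) = mat_id"
proof -
  have "mat_comp S (mat_comp flip_mat (mat_comp (mat_negx S) flip_mat)) j = mat_id j" for j
  proof -
    have e: "app (sop S sub_x) (app flip (app (sop S sub_negx) (app flip (const2 (bv j))))) = const2 (bv j)"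
      using un unfolding unitary_def by blast
    have "app (sop S sub_x) (app flip (app (sop S sub_negx) (app flip (const2 (bv j))))) =
        subst_vec 0 (mat_comp S (mat_comp flip_mat (mat_comp (mat_negx S) flip_mat)) j)"
      by (simp only: sub_x_eq_sub_plus_0 sop_sub_negx_mat_negx flip_sop_flip_mat[where s = 0] subst_vec_single[where s = 0, symmetric] app_sop_subst_vec)
         (simp add: mat_comp_def ext_lin_single)
    then have "subst_vec 0 (mat_comp S (mat_comp flip_mat (mat_comp (mat_negx S) flip_mat)) j) = subst_vec 0 (Poly_Mapping.single j 1)"
      using e by (simp add: subst_vec_single)
    then show ?thesis unfolding mat_id_def by (rule subst_vec_inj)
  qed
  then show 1: "mat_comp S (mat_comp flip_mat (mat_comp (mat_negx S) flip_mat)) = mat_id" by auto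
  have "mat_negx (mat_comp S (mat_comp flip_mat (mat_comp (mat_negx S) flip_mat))) = mat_negx mat_id" using 1 by simp
  then show "mat_comp (mat_negx S) (mat_comp flip_mat (mat_comp S flip_mat)) = mat_id" by (simp add: mat_negx_mat_comp mat_negx_flip_mat)
qed

lemma unitary_op_inverse:
  assumes un: "unitary S"
  shows "op_comp (sop S (sub_plus s)) (op_comp flip (op_comp (sop (mat_negx S) (sub_plus s)) flip)) = id_op"
  unfolding flip_sop_flip_mat[where s = s] op_comp_sop unitary_mat_inverse(1)[OF un] sop_mat_id ..

lemma unitary_op_inverse_negx:
  assumes un: "unitary S"
  shows "op_comp (sop (mat_negx S) (sub_plus s)) (op_comp flip (op_comp (sop S (sub_plus s)) flip)) = id_op"
  unfolding flip_sop_flip_mat[where s = s] op_comp_sop unitary_mat_inverse(2)[OF un] sop_mat_id ..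

lemma bij_ext_lin_comp_flip:
  assumes un: "unitary S"
  shows "bij (ext_lin (comp_flip S))"
proof (rule o_bij[where g = "ext_lin (mat_comp (mat_negx S) flip_mat)"])
  show "ext_lin (mat_comp (mat_negx S) flip_mat) \<circ> ext_lin (comp_flip S) = id"
    unfolding mat_comp_flip_mat[symmetric]
    by (auto simp: fun_eq_iff ext_lin_mat_comp[symmetric] mat_comp_assoc[symmetric] unitary_mat_inverse(2)[OF un])
  show "ext_lin (comp_flip S) \<circ> ext_lin (mat_comp (mat_negx S) flip_mat) = id"
    unfolding mat_comp_flip_mat[symmetric]
    by (auto simp: fun_eq_iff ext_lin_mat_comp[symmetric] mat_comp_assoc[symmetric] unitary_mat_inverse(1)[OF un])
qed

section \<open>Reflection x \<mapsto> -x and the identity for R(x1)(Y(x2) \<otimes> 1)\<close>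

definition op_negx :: "('i \<Rightarrow> 'j ser2) \<Rightarrow> 'i \<Rightarrow> 'j ser2" where
  "op_negx E = (\<lambda>i. negvar (E i))"

lemma negvar_app: "negvar (app E F) = app (op_negx E) (negvar F)"
proof (intro ext)
  fix a b
  have "negvar (app E F) a b = Sum_any (\<lambda>(i, c, d). smul ((-1) ^ nat \<bar>a\<bar>)
      (smul (Poly_Mapping.lookup (F (a - c) (b - d)) i) (E i c d)))"
    unfolding negvar_def app_def smul_Sum_any by (simp add: case_prod_beta)
  also have "\<dots> = app (op_negx E) (negvar F) a b"
    unfolding app_def op_negx_def negvar_def
  proof (rule Sum_any.cong, clarify)
    fix i c d
    have "((-1::complex) ^ nat \<bar>a\<bar>) = (-1) ^ nat \<bar>a - c\<bar> * (-1) ^ nat \<bar>c\<bar>"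
      using minus_one_power_abs_add[of "a - c" c] by simp
    then show "smul ((-1) ^ nat \<bar>a\<bar>) (smul (Poly_Mapping.lookup (F (a - c) (b - d)) i) (E i c d)) =
      smul (Poly_Mapping.lookup (smul ((-1) ^ nat \<bar>a - c\<bar>) (F (a - c) (b - d))) i) (smul ((-1) ^ nat \<bar>c\<bar>) (E i c d))"
      by (simp add: smul_smul mult_ac)
  qed
  finally show "negvar (app E F) a b = app (op_negx E) (negvar F) a b" .
qed

lemma op_negx_op_comp: "op_negx (op_comp E E') = op_comp (op_negx E) (op_negx E')"
  unfolding op_comp_def by (simp add: op_negx_def[of "\<lambda>j. app E (E' j)"] negvar_app) (simp add: op_negx_def)

lemma sign_times_sub_plus: "(-1) ^ nat \<bar>c\<bar> * sub_plus s f c d = sub_plus (- s) (fls_negx f) c d"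
proof (cases "0 \<le> d")
  case True
  define m where "m = ((-1::complex) ^ nat d)"
  define u where "u = ((-1::complex) ^ nat \<bar>c\<bar>)"
  define B where "B = ((of_int (c + d) :: complex) gchoose nat d)"
  have h1: "((-1::complex) ^ nat \<bar>c + d\<bar>) = u * m"
    using minus_one_power_abs_add[of c d] True unfolding u_def m_def by simp
  have h2: "(- s) ^ nat d = m * s ^ nat d" unfolding m_def by (rule power_minus)
  have h3: "m * m = 1" unfolding m_def by (simp add: power_add[symmetric])
  have "sub_plus (- s) (fls_negx f) c d = (m * s ^ nat d) * B * ((u * m) * fls_nth f (c + d))"
    using True unfolding sub_plus_def fls_nth_negx h1 h2 B_def by simp
  also have "\<dots> = (m * m) * (u * (s ^ nat d * B * fls_nth f (c + d)))" by (simp add: mult_ac)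
  also have "\<dots> = u * sub_plus s f c d" using True unfolding h3 sub_plus_def B_def by simp
  finally show ?thesis unfolding u_def by simp
qed (simp add: sub_plus_def)

lemma op_negx_coeff_op: "op_negx (coeff_op g h) = coeff_op (\<lambda>i p c d. (-1) ^ nat \<bar>c\<bar> * g i p c d) h"
  unfolding op_negx_def negvar_def coeff_op_def by (simp add: fun_eq_iff smul_Sum_any smul_smul)

lemma op_negx_sop: "op_negx (sop M (sub_plus s)) = sop (mat_negx M) (sub_plus (- s))"
  unfolding sop_coeff_op op_negx_coeff_op mat_negx_def by (simp add: sign_times_sub_plus lookup_vec_negx)

lemma op_negx_leg13: "op_negx (leg13 M (sub_plus s)) = leg13 (mat_negx M) (sub_plus (- s))"
  unfolding leg13_coeff_op op_negx_coeff_op mat_negx_def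
  by (intro arg_cong2[where f = coeff_op] ext) (auto simp: sign_times_sub_plus lookup_vec_negx split: prod.splits)

lemma op_negx_leg23: "op_negx (leg23 M (sub_plus s)) = leg23 (mat_negx M) (sub_plus (- s))"
  unfolding leg23_coeff_op op_negx_coeff_op mat_negx_def
  by (intro arg_cong2[where f = coeff_op] ext) (auto simp: sign_times_sub_plus lookup_vec_negx split: prod.splits)

lemma op_negx_Y12: "op_negx (Y12 Y) = Y12 Y"
  unfolding op_negx_def negvar_def Y12_def by (auto simp: fun_eq_iff)

lemma hexagon_op_comp:
  assumes H: "\<forall>t. app (sop S sub_x) (app (Y12 Y) (const2 t)) =
       app (Y12 Y) (app (leg23 S sub_x) (app (leg13 S (sub_plus 1)) (const2 t)))"
  shows "op_comp (sop S (sub_plus 0)) (Y12 Y) = op_comp (Y12 Y) (op_comp (leg23 S (sub_plus 0)) (leg13 S (sub_plus 1)))"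
proof
  fix j
  show "op_comp (sop S (sub_plus 0)) (Y12 Y) j = op_comp (Y12 Y) (op_comp (leg23 S (sub_plus 0)) (leg13 S (sub_plus 1))) j"
    using H[rule_format, of "bv j"] unfolding op_comp_def sub_x_eq_sub_plus_0 by simp
qed

lemma hexagon_negx:
  assumes H: "op_comp (sop S (sub_plus 0)) (Y12 Y) = op_comp (Y12 Y) (op_comp (leg23 S (sub_plus 0)) (leg13 S (sub_plus 1)))"
  shows "op_comp (sop (mat_negx S) (sub_plus 0)) (Y12 Y) = op_comp (Y12 Y) (op_comp (leg23 (mat_negx S) (sub_plus 0)) (leg13 (mat_negx S) (sub_plus (-1))))"
  using arg_cong[OF H, of op_negx] by (simp add: op_negx_op_comp op_negx_sop op_negx_leg13 op_negx_leg23 op_negx_Y12)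


definition lift_op :: "('i \<Rightarrow> 'k) \<Rightarrow> ('i \<Rightarrow> 'k \<Rightarrow> 'i) \<Rightarrow> ('k \<Rightarrow> 'k ser2) \<Rightarrow> 'i \<Rightarrow> 'i ser2" where
  "lift_op p ins X = (\<lambda>i cc dd. vec_map (ins i) (X (p i) cc dd))"

text \<open>Here p projects onto the active tensor factors and ins i inserts new active factors,
 keeping the passive ones of i.\<close>

lemma lift_op_op_comp:
  assumes inj: "\<And>i. inj (ins i)" and p_ins: "\<And>i k. p (ins i k) = k" and ins_ins: "\<And>i k. ins (ins i k) = ins i"
  shows "op_comp (lift_op p ins X) (lift_op p ins X') = lift_op p ins (op_comp X X')"
proof
  fix i
  have "op_comp (lift_op p ins X) (lift_op p ins X') i = app (\<lambda>k. lift_op p ins X (ins i k)) (X' (p i))"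
    unfolding op_comp_def lift_op_def by (rule app_vec_map_right[OF inj])
  also have "(\<lambda>k. lift_op p ins X (ins i k)) = (\<lambda>k cc dd. vec_map (ins i) (X k cc dd))"
    unfolding lift_op_def p_ins ins_ins ..
  also have "app \<dots> (X' (p i)) = lift_op p ins (op_comp X X') i"
    unfolding app_vec_map_left[OF inj] lift_op_def op_comp_def ..
  finally show "op_comp (lift_op p ins X) (lift_op p ins X') i = lift_op p ins (op_comp X X') i" .
qed

lemma lift_op_id_op: "lift_op p ins id_op = reindex_op (\<lambda>i. ins i (p i))"
  unfolding lift_op_def id_op_def reindex_op_def by (auto simp: fun_eq_iff vec_map_const2 vec_map_bv)

lemma lift_op_flip: "lift_op p ins flip = reindex_op (\<lambda>i. ins i (prod.swap (p i)))"
  unfolding lift_op_def flip_reindex_op reindex_op_def by (auto simp: fun_eq_iff vec_map_const2 vec_map_bv)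

definition lift13 :: "('a \<times> 'a \<Rightarrow> ('a \<times> 'a) ser2) \<Rightarrow> 'a \<times> 'a \<times> 'a \<Rightarrow> ('a \<times> 'a \<times> 'a) ser2" where
  "lift13 = lift_op (\<lambda>(a, b, c). (a, c)) (\<lambda>(a, b, c) (m, t). (m, b, t))"

definition lift23 :: "('a \<times> 'a \<Rightarrow> ('a \<times> 'a) ser2) \<Rightarrow> 'a \<times> 'a \<times> 'a \<Rightarrow> ('a \<times> 'a \<times> 'a) ser2" where
  "lift23 = lift_op (\<lambda>(a, b, c). (b, c)) (\<lambda>(a, b, c) k. (a, k))"

lemma lift13_op_comp: "op_comp (lift13 X) (lift13 X') = lift13 (op_comp X X')"
  unfolding lift13_def by (rule lift_op_op_comp) (auto simp: inj_def)

lemma lift23_op_comp: "op_comp (lift23 X) (lift23 X') = lift23 (op_comp X X')"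
  unfolding lift23_def by (rule lift_op_op_comp) (auto simp: inj_def)

lemma leg13_lift13: "leg13 M \<sigma> = lift13 (sop M \<sigma>)"
  unfolding leg13_coeff_op sop_coeff_op lift13_def lift_op_def
  by (auto simp: fun_eq_iff vec_map_coeff_op inj_def) (simp add: coeff_op_def)

lemma leg23_lift23: "leg23 M \<sigma> = lift23 (sop M \<sigma>)"
  unfolding leg23_coeff_op sop_coeff_op lift23_def lift_op_def
  by (auto simp: fun_eq_iff vec_map_coeff_op inj_def) (simp add: coeff_op_def)

lemma lift13_id_op: "lift13 id_op = id_op" and lift23_id_op: "lift23 id_op = id_op"
  unfolding lift13_def lift23_def lift_op_id_op unfolding id_op_reindex_op
  by (intro arg_cong[where f = reindex_op] ext; auto)+

lemma lift13_flip: "lift13 flip = reindex_op (\<lambda>(a, b, c). (c, b, a))"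
  and lift23_flip: "lift23 flip = reindex_op (\<lambda>(a, b, c). (a, c, b))"
  unfolding lift13_def lift23_def lift_op_flip
  by (intro arg_cong[where f = reindex_op] ext; auto)+

text \<open>The inverse of S^23(-x1) S^13(-x1 + x2) provided by unitarity, written with the legs of
 S(x) and flips of tensor factors.\<close>

definition inv_legs :: "'a qop \<Rightarrow> 'a \<times> 'a \<times> 'a \<Rightarrow> ('a \<times> 'a \<times> 'a) ser2" where
  "inv_legs S = op_comp (reindex_op (\<lambda>(a, b, c). (c, b, a))) (op_comp (leg13 S (sub_plus (-1)))
     (op_comp (reindex_op (\<lambda>(a, b, c). (c, b, a))) (op_comp (reindex_op (\<lambda>(a, b, c). (a, c, b)))
       (op_comp (leg23 S (sub_plus 0)) (reindex_op (\<lambda>(a, b, c). (a, c, b)))))))"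

lemma regular_inv_legs: "regular_op (inv_legs S)"
  unfolding inv_legs_def by (intro regular_op_comp regular_ops)

lemma legs_negx_inv_legs:
  assumes un: "unitary S"
  shows "op_comp (op_comp (leg23 (mat_negx S) (sub_plus 0)) (leg13 (mat_negx S) (sub_plus (-1)))) (inv_legs S) = id_op"
proof -
  let ?F13 = "reindex_op (\<lambda>(a::'a, b::'a, c::'a). (c, b, a))" and ?F23 = "reindex_op (\<lambda>(a::'a, b::'a, c::'a). (a, c, b))"
  let ?G = "op_comp ?F23 (op_comp (leg23 S (sub_plus 0)) ?F23)"
  have U13: "op_comp (leg13 (mat_negx S) (sub_plus (-1))) (op_comp ?F13 (op_comp (leg13 S (sub_plus (-1))) ?F13)) = id_op"
    using arg_cong[OF unitary_op_inverse_negx[OF un, of "-1"], of lift13]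
    by (simp add: lift13_op_comp[symmetric] leg13_lift13[symmetric] lift13_flip lift13_id_op)
  have U23: "op_comp (leg23 (mat_negx S) (sub_plus 0)) ?G = id_op"
    using arg_cong[OF unitary_op_inverse_negx[OF un, of 0], of lift23]
    by (simp add: lift23_op_comp[symmetric] leg23_lift23[symmetric] lift23_flip lift23_id_op)
  have G: "regular_op ?G" by (intro regular_op_comp regular_ops)
  have "op_comp (leg13 (mat_negx S) (sub_plus (-1))) (inv_legs S) =
      op_comp (op_comp (leg13 (mat_negx S) (sub_plus (-1))) (op_comp ?F13 (op_comp (leg13 S (sub_plus (-1))) ?F13))) ?G"
    unfolding inv_legs_def by (rule op_comp_assoc4_regular) (use G in \<open>simp_all add: regular_ops regular_op_laurent\<close>)
  then have "op_comp (leg13 (mat_negx S) (sub_plus (-1))) (inv_legs S) = ?G"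
    using U13 by simp
  moreover have "op_comp (op_comp (leg23 (mat_negx S) (sub_plus 0)) (leg13 (mat_negx S) (sub_plus (-1)))) (inv_legs S) =
      op_comp (leg23 (mat_negx S) (sub_plus 0)) (op_comp (leg13 (mat_negx S) (sub_plus (-1))) (inv_legs S))"
    by (rule op_comp_assoc_regular12[symmetric]) (simp_all add: regular_ops regular_op_laurent regular_inv_legs)
  ultimately show ?thesis using U23 by simp
qed

lemma reindex_inv_legs:
  fixes S :: "'a qop"
  shows "op_comp (reindex_op (\<lambda>(a, b, c). (c, a, b))) (inv_legs S) =
    op_comp (op_comp (leg12 S (sub_plus (-1))) (reindex_op (\<lambda>(a, b, c). (b, a, c))))
       (op_comp (leg23 S (sub_plus 0)) (reindex_op (\<lambda>(a, b, c). (a, c, b))))"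
proof -
  let ?L13 = "leg13 S (sub_plus (-1))" and ?G0 = "op_comp (leg23 S (sub_plus 0)) (reindex_op (\<lambda>(a::'a, b::'a, c::'a). (a, c, b)))"
  let ?r = "\<lambda>(a::'a, b::'a, c::'a). (c, a, b)" and ?f = "\<lambda>(a::'a, b::'a, c::'a). (c, b, a)"
    and ?g = "\<lambda>x. (\<lambda>(a::'a, b::'a, c::'a). (c, b, a)) ((\<lambda>(a::'a, b::'a, c::'a). (a, c, b)) x)"
  have injs: "inj ?f" "inj (\<lambda>(a::'a, b::'a, c::'a). (a, c, b))" by (auto simp: inj_def)
  have G0: "regular_op ?G0" by (intro regular_op_comp regular_ops)
  have "op_comp (reindex_op ?r) (inv_legs S) =
      op_comp (reindex_op ?r) (op_comp (reindex_op ?f) (op_comp ?L13 (op_comp (reindex_op ?g) ?G0)))"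
    unfolding inv_legs_def reindex_op_op_comp[OF injs] ..
  also have "\<dots> = op_comp (op_comp (reindex_op ?r) (op_comp (reindex_op ?f) (op_comp ?L13 (reindex_op ?g)))) ?G0"
    by (simp only: op_comp_assoc_regular12 regular_ops regular_op_comp regular_op_laurent G0)
  also have "op_comp (reindex_op ?r) (op_comp (reindex_op ?f) (op_comp ?L13 (reindex_op ?g))) =
      op_comp (leg12 S (sub_plus (-1))) (reindex_op (\<lambda>(a, b, c). (b, a, c)))"
    unfolding op_comp_reindex_op
    by (simp add: op_comp_def app_reindex_op leg12_coeff_op leg13_coeff_op vec_map_coeff_op inj_def fun_eq_iff split: prod.splits)
       (simp add: coeff_op_def case_prod_beta)
  finally show ?thesis .
qed

lemma unitary_flip_conj:
  assumes un: "unitary S"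
  shows "op_comp (sop S (sub_plus 0)) (op_comp flip (sop (mat_negx S) (sub_plus 0))) = flip"
proof -
  have "op_comp (sop S (sub_plus 0)) (op_comp flip (op_comp (sop (mat_negx S) (sub_plus 0)) (op_comp flip flip))) =
      op_comp (op_comp (sop S (sub_plus 0)) (op_comp flip (op_comp (sop (mat_negx S) (sub_plus 0)) flip))) flip"
    by (rule op_comp_assoc4_regular) (simp_all add: regular_ops regular_op_laurent)
  then show ?thesis using unitary_op_inverse[OF un, of 0] by (simp add: op_comp_flip_flip)
qed

text \<open>Reflecting the hexagon identity gives S(-x1)(Y(x2) \<otimes> 1) = (Y(x2) \<otimes> 1) S^23(-x1) S^13(-x1 + x2);
 cancelling the legs on the right with inv_legs isolates Y(x2) \<otimes> 1.\<close>

lemma Y12_inv_legs: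
  assumes tr: "truncated Y" and un: "unitary S"
    and H: "\<forall>t. app (sop S sub_x) (app (Y12 Y) (const2 t)) =
       app (Y12 Y) (app (leg23 S sub_x) (app (leg13 S (sub_plus 1)) (const2 t)))"
  shows "Y12 Y = op_comp (sop (mat_negx S) (sub_plus 0)) (op_comp (Y12 Y) (inv_legs S))"
proof -
  let ?B0 = "sop (mat_negx S) (sub_plus 0)"
  let ?N = "op_comp (leg23 (mat_negx S) (sub_plus 0)) (leg13 (mat_negx S) (sub_plus (-1)))"
  have gY12: "laurent_op (Y12 Y)" using tr by (rule laurent_op_Y12)
  have nN: "regular_op ?N" by (intro regular_op_comp regular_ops)
  have "Y12 Y = op_comp (Y12 Y) (op_comp ?N (inv_legs S))" using legs_negx_inv_legs[OF un] by simp
  also have "\<dots> = op_comp (op_comp (Y12 Y) ?N) (inv_legs S)"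
    by (rule op_comp_assoc_regular23[OF gY12 nN regular_inv_legs])
  also have "op_comp (Y12 Y) ?N = op_comp ?B0 (Y12 Y)"
    by (rule hexagon_negx[OF hexagon_op_comp[OF H], symmetric])
  also have "op_comp \<dots> (inv_legs S) = op_comp ?B0 (op_comp (Y12 Y) (inv_legs S))"
    by (rule op_comp_assoc_regular13[OF regular_sop[OF admissible_sub_plus] gY12 regular_inv_legs, symmetric])
  finally show ?thesis .
qed

lemma sop_flip_Y12:
  assumes tr: "truncated Y" and un: "unitary S"
    and H: "\<forall>t. app (sop S sub_x) (app (Y12 Y) (const2 t)) =
       app (Y12 Y) (app (leg23 S sub_x) (app (leg13 S (sub_plus 1)) (const2 t)))"
  shows "op_comp (sop S (sub_plus 0)) (op_comp flip (Y12 Y)) =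
    op_comp (Y23 Y) (op_comp (reindex_op (\<lambda>(a, b, c). (c, a, b))) (inv_legs S))"
proof -
  let ?A0 = "sop S (sub_plus 0)" and ?B0 = "sop (mat_negx S) (sub_plus 0)" and ?K = "inv_legs S"
  have gY12: "laurent_op (Y12 Y)" and gY23: "laurent_op (Y23 Y)"
    using tr by (rule laurent_op_Y12, rule laurent_op_Y23)
  have gW: "laurent_op (op_comp (Y12 Y) ?K)" by (rule laurent_op_comp_regular[OF gY12 regular_inv_legs])
  have "op_comp ?A0 (op_comp flip (Y12 Y)) = op_comp ?A0 (op_comp flip (op_comp ?B0 (op_comp (Y12 Y) ?K)))"
    using Y12_inv_legs[OF tr un H] by simp
  also have "\<dots> = op_comp (op_comp ?A0 (op_comp flip ?B0)) (op_comp (Y12 Y) ?K)"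
    using gW by (simp add: op_comp_assoc_regular12 regular_ops regular_op_comp)
  also have "\<dots> = op_comp (op_comp flip (Y12 Y)) ?K"
    unfolding unitary_flip_conj[OF un] by (rule op_comp_assoc_regular13[OF regular_flip gY12 regular_inv_legs])
  also have "\<dots> = op_comp (Y23 Y) (op_comp (reindex_op (\<lambda>(a, b, c). (c, a, b))) ?K)"
    unfolding flip_op_comp_Y12 by (rule op_comp_assoc_regular23[OF gY23 regular_reindex_op regular_inv_legs, symmetric])
  finally show ?thesis .
qed

lemma comp_flip_Y12:
  assumes tr: "truncated Y" and un: "unitary S"
    and H: "\<forall>t. app (sop S sub_x) (app (Y12 Y) (const2 t)) =
       app (Y12 Y) (app (leg23 S sub_x) (app (leg13 S (sub_plus 1)) (const2 t)))"
  shows "app (sop (comp_flip S) sub_x) (app (Y12 Y) (const2 t)) =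
     app (Y23 Y) (app (leg12 (comp_flip S) (sub_plus (-1))) (app (leg23 (comp_flip S) sub_x) (const2 t)))"
proof -
  let ?A0 = "sop S (sub_plus 0)" and ?c = "const2 t"
  let ?O1 = "op_comp (leg12 S (sub_plus (-1))) (reindex_op (\<lambda>(a, b, c). (b, a, c)))"
  let ?O2 = "op_comp (leg23 S (sub_plus 0)) (reindex_op (\<lambda>(a, b, c). (a, c, b)))"
  have gY12: "laurent_op (Y12 Y)" and gY23: "laurent_op (Y23 Y)"
    using tr by (rule laurent_op_Y12, rule laurent_op_Y23)
  have n1: "regular_op ?O1" and n2: "regular_op ?O2" by (intro regular_op_comp regular_ops)+
  have "app (sop (comp_flip S) sub_x) (app (Y12 Y) ?c) = app (op_comp (op_comp ?A0 flip) (Y12 Y)) ?c"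
    unfolding sop_comp_flip sub_x_eq_sub_plus_0
    by (rule app_assoc_laurent) (use gY12 in \<open>auto simp: op_props intro: laurent_op_comp nonneg_op_comp\<close>)
  also have "op_comp (op_comp ?A0 flip) (Y12 Y) = op_comp (Y23 Y) (op_comp ?O1 ?O2)"
    unfolding op_comp_assoc_regular12[OF regular_ops(3) regular_flip gY12, symmetric] sop_flip_Y12[OF tr un H]
      reindex_inv_legs ..
  also have "app \<dots> ?c = app (Y23 Y) (app (op_comp ?O1 ?O2) ?c)"
    by (rule app_op_comp_const2) (use gY23 regular_op_comp[OF n1 n2] in \<open>auto simp: regular_op_def\<close>)
  also have "app (op_comp ?O1 ?O2) ?c = app ?O1 (app ?O2 ?c)"
    by (rule app_op_comp_const2) (use n1 n2 in \<open>auto simp: regular_op_def\<close>)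
  finally show ?thesis
    unfolding leg12_comp_flip leg23_comp_flip sub_x_eq_sub_plus_0 .
qed

theorem lemma3p7:
  fixes Y :: "'b vop" and vac :: "'b vec" and S :: "'b qop"
  assumes "qva Y vac S"
  shows "invertible_twisting Y vac Y vac (comp_flip S)"
proof -
  have w: "weak_qva Y vac" and un: "unitary S"
    and vacS: "\<forall>v. app (sop S sub_x) (const2 (tens vac v)) = const2 (tens vac v)"
    and H: "\<forall>t. app (sop S sub_x) (app (Y12 Y) (const2 t)) =
       app (Y12 Y) (app (leg23 S sub_x) (app (leg13 S (sub_plus 1)) (const2 t)))"
    using assms unfolding qva_def by blast+
  have tr: "truncated Y" using w unfolding weak_qva_def by (blast intro: nonlocal_va_truncated)
  show ?thesis
    unfolding invertible_twisting_def twisting_op_def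
    using comp_flip_vacuum_right[OF vacS] comp_flip_vacuum_left[OF vacS un] comp_flip_Y23[OF tr H]
      comp_flip_Y12[OF tr un H] bij_ext_lin_comp_flip[OF un]
    by blast
qed

end
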